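(* Let $(\Lambda,d)$ be a finitely aligned $k$-graph and let $(\overline{\Lambda},\overline d)$ be its extension as described in the context. If $\{t_\lambda:\lambda\in\overline{\Lambda}\}$ is a Cuntz–Krieger $\overline{\Lambda}$-family, then $\{t_\lambda:\lambda\in\Lambda\}$ is a Cuntz–Krieger $\Lambda$-family.
   Context: A $k$-graph $(\Lambda,d)$ is a countable category with a degree functor $d:\Lambda\to\mathbb{N}^k$ satisfying unique factorization; $\Lambda^0$ vertices (identity morphisms), $r,s$ range/source, $v\Gamma=\{\lambda\in\Gamma:r(\lambda)=v\}$; $e_i$ standard basis, $\le$ coordinatewise, $\vee,\wedge$ coordinatewise max/min. For a $k$-graph $\Gamma$, $\Gamma^{\min}(\lambda,\mu)=\{(\alpha,\beta):\lambda\alpha=\mu\beta,\ d(\lambda\alpha)=d(\lambda)\vee d(\mu)\}$; $\Gamma$ is finitely aligned if these are finite; $E\subseteq v\Gamma$ is exhaustive if every $\mu\in v\Gamma$ has some $\lambda\in E$ with $\Gamma^{\min}(\lambda,\mu)\ne\emptyset$; $v\mathcal{FE}(\Gamma)$ is the set of finite exhaustive subsets of $v\Gamma$. For finitely aligned $\Gamma$, a Cuntz–Krieger $\Gamma$-family in a $C^*$-algebra is a family of partial isometries $\{t_\lambda:\lambda\in\Gamma\}$ with (TCK1) $\{t_v:v\in\Gamma^0\}$ mutually orthogonal projections; (TCK2) $t_{\lambda\mu}=t_\lambda t_\mu$ when $s(\lambda)=r(\mu)$; (TCK3) $t_\lambda^*t_\mu=\sum_{(\alpha,\beta)\in\Gamma^{\min}(\lambda,\mu)}t_\alpha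 t_\beta^*$; (CK) $\prod_{\lambda\in E}(t_v-t_\lambda t_\lambda^* )=0$ for all $v\in\Gamma^0$, $E\in v\mathcal{FE}(\Gamma)$. Extension: for $m\in(\mathbb{N}\cup\{\infty\})^k$, $\Omega_{k,m}$ has objects $\{p\in\mathbb{N}^k:p\le m\}$, morphisms $(p,q)$, $p\le q\le m$, $r(p,q)=p$, $s(p,q)=q$, $d(p,q)=q-p$. A graph morphism $x:\Omega_{k,m}\to\Lambda$ is a degree-preserving functor; $d(x)=m$, $x(a,b)=x((a,b))$, $x(a)=x(a,a)$; it is a boundary path if there is $n_x\in\mathbb{N}^k$, $n_x\le d(x)$, with $x(p)\Lambda^{e_i}=\emptyset$ whenever $p\in\mathbb{N}^k$, $n_x\le p\le d(x)$, $p_i=d(x)_i$; $\Lambda^{\le\infty}$ is the set of boundary paths. $\sigma^px(a,b)=x(a+p,b+p)$; $\lambda x$ is the concatenation. $V_\Lambda=\{(x;m):x\in\Lambda^{\le\infty},m\in\mathbb{N}^k,m\not\le d(x)\}$, $(x;m)\approx(y;p)$ iff $x(m\wedge d(x))=y(p\wedge d(y))$ and $m-m\wedge d(x)=p-p\wedge d(y)$; classes $[x;m]$ form $\widetilde{V_\Lambda}$. $P_\Lambda=\{(x;(m,n)):x\in\Lambda^{\le\infty},m\le n\in\mathbb{N}^k,n\not\le d(x)\}$, $(x;(m,n))\sim(y;(p,q))$ iff $x(m\wedge d(x),n\wedge d(x))=y(p\wedge d(y),q\wedge d(y))$, $m-m\wedge d(x)=p-p\wedge d(y)$, $n-m=q-p$;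 classes $[x;(m,n)]$ form $\widetilde{P_\Lambda}$. $\overline{\Lambda}$ is the $k$-graph with objects $\Lambda^0\sqcup\widetilde{V_\Lambda}$ and morphisms $\Lambda\sqcup\widetilde{P_\Lambda}$: on $\Lambda$ as in $\Lambda$; $\overline r([x;(m,n)])=x(m)$ if $m\le d(x)$, else $[x;m]$; $\overline s([x;(m,n)])=[x;n]$; identity at $[x;m]$ is $[x;(m,m)]$; $\lambda[x;(m,n)]=[\lambda\sigma^mx;(0,d(\lambda)+n-m)]$; $[x;(m,n)][y;(p,q)]=[z;(m,n+q-p)]$, $z=x(0,n\wedge d(x))\sigma^{p\wedge d(y)}y$; degree $\overline d|_\Lambda=d$, $\overline d([x;(m,n)])=n-m$. When $\Lambda$ is finitely aligned, so is $\overline{\Lambda}$. *)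

theory Defs
  imports Complex_Main "HOL-Library.Extended_Nat" "HOL-Library.Function_Algebras"
    "HOL-Library.Countable_Set"
begin

class cstar_algebra = real_normed_algebra + banach +
  fixes scaleC :: "complex \<Rightarrow> 'a \<Rightarrow> 'a"
    and adj :: "'a \<Rightarrow> 'a"
  assumes scaleC_add_right: "scaleC c (x + y) = scaleC c x + scaleC c y"
    and scaleC_add_left: "scaleC (b + c) x = scaleC b x + scaleC c x"
    and scaleC_scaleC: "scaleC b (scaleC c x) = scaleC (b * c) x"
    and scaleC_one: "scaleC 1 x = x"
    and scaleR_scaleC: "scaleR r x = scaleC (complex_of_real r) x"
    and norm_scaleC: "norm (scaleC c x) = cmod c * norm x"
    and mult_scaleC_left: "scaleC c x * y = scaleC c (x * y)"
    and mult_scaleC_right: "x * scaleC c y = scaleC c (x * y)"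
    and adj_adj: "adj (adj x) = x"
    and adj_add: "adj (x + y) = adj x + adj y"
    and adj_scaleC: "adj (scaleC c x) = scaleC (cnj c) (adj x)"
    and adj_mult: "adj (x * y) = adj y * adj x"
    and cstar_identity: "norm (adj x * x) = norm x * norm x"

text \<open>Degrees live in N^k, represented as functions 'k => nat for a finite index type 'k
  (pointwise order, sup = coordinatewise max, inf = coordinatewise min).
  Objects are identified with their identity morphisms.\<close>

record ('m, 'k) kgraph =
  Mor :: "'m set"
  rng :: "'m \<Rightarrow> 'm"
  src :: "'m \<Rightarrow> 'm"
  cmp :: "'m \<Rightarrow> 'm \<Rightarrow> 'm"
  deg :: "'m \<Rightarrow> 'k \<Rightarrow> nat"

definition verts :: "('m, 'k) kgraph \<Rightarrow> 'm set" where
  "verts G = rng G ` Mor G"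

definition kgraph :: "('m, 'k::finite) kgraph \<Rightarrow> bool" where
  "kgraph G \<longleftrightarrow>
     countable (Mor G) \<and>
     (\<forall>l\<in>Mor G. rng G l \<in> Mor G \<and> src G l \<in> Mor G \<and>
        rng G (rng G l) = rng G l \<and> src G (rng G l) = rng G l \<and>
        rng G (src G l) = src G l \<and> src G (src G l) = src G l \<and>
        cmp G (rng G l) l = l \<and> cmp G l (src G l) = l) \<and>
     (\<forall>l\<in>Mor G. \<forall>u\<in>Mor G. src G l = rng G u \<longrightarrow>
        cmp G l u \<in> Mor G \<and> rng G (cmp G l u) = rng G l \<and> src G (cmp G l u) = src G u \<and>
        deg G (cmp G l u) = deg G l + deg G u) \<and>
     (\<forall>l\<in>Mor G. \<forall>u\<in>Mor G. \<forall>w\<in>Mor G. src G l = rng G u \<longrightarrow> src G u = rng G w \<longrightarrow>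
        cmp G (cmp G l u) w = cmp G l (cmp G u w)) \<and>
     (\<forall>l\<in>Mor G. \<forall>m n. deg G l = m + n \<longrightarrow>
        (\<exists>!p. fst p \<in> Mor G \<and> snd p \<in> Mor G \<and> src G (fst p) = rng G (snd p) \<and>
               deg G (fst p) = m \<and> deg G (snd p) = n \<and> cmp G (fst p) (snd p) = l))"

definition MCE :: "('m, 'k::finite) kgraph \<Rightarrow> 'm \<Rightarrow> 'm \<Rightarrow> ('m \<times> 'm) set" where
  "MCE G l u = {(a, b). a \<in> Mor G \<and> b \<in> Mor G \<and> src G l = rng G a \<and> src G u = rng G b \<and>
      cmp G l a = cmp G u b \<and> deg G (cmp G l a) = sup (deg G l) (deg G u)}"

definition finitely_aligned :: "('m, 'k::finite) kgraph \<Rightarrow> bool" where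
  "finitely_aligned G \<longleftrightarrow> (\<forall>l\<in>Mor G. \<forall>u\<in>Mor G. finite (MCE G l u))"

definition vMor :: "('m, 'k) kgraph \<Rightarrow> 'm \<Rightarrow> 'm set" where
  "vMor G v = {l \<in> Mor G. rng G l = v}"

definition exhaustive :: "('m, 'k::finite) kgraph \<Rightarrow> 'm \<Rightarrow> 'm set \<Rightarrow> bool" where
  "exhaustive G v E \<longleftrightarrow> E \<subseteq> vMor G v \<and> (\<forall>u\<in>vMor G v. \<exists>l\<in>E. MCE G l u \<noteq> {})"

definition vFE :: "('m, 'k::finite) kgraph \<Rightarrow> 'm \<Rightarrow> 'm set set" where
  "vFE G v = {E. finite E \<and> exhaustive G v E}"

text \<open>Product of a nonempty list in a (noncommutative, possibly non-unital) algebra.\<close>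
fun nprod :: "'a::times list \<Rightarrow> 'a" where
  "nprod [] = undefined"
| "nprod [x] = x"
| "nprod (x # y # xs) = x * nprod (y # xs)"

definition partial_isometry :: "'a::cstar_algebra \<Rightarrow> bool" where
  "partial_isometry a \<longleftrightarrow> a * adj a * a = a"

definition CK_family :: "('m, 'k::finite) kgraph \<Rightarrow> ('m \<Rightarrow> 'a::cstar_algebra) \<Rightarrow> bool" where
  "CK_family G t \<longleftrightarrow>
     (\<forall>l\<in>Mor G. partial_isometry (t l)) \<and>
     (\<forall>v\<in>verts G. adj (t v) = t v \<and> t v * t v = t v) \<and>
     (\<forall>v\<in>verts G. \<forall>w\<in>verts G. v \<noteq> w \<longrightarrow> t v * t w = 0) \<and>
     (\<forall>l\<in>Mor G. \<forall>u\<in>Mor G. src G l = rng G u \<longrightarrow> t (cmp G l u) = t l * t u) \<and>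
     (\<forall>l\<in>Mor G. \<forall>u\<in>Mor G. adj (t l) * t u = (\<Sum>(a, b)\<in>MCE G l u. t a * adj (t b))) \<and>
     (\<forall>v\<in>verts G. \<forall>E\<in>vFE G v. \<forall>xs. distinct xs \<and> set xs = E \<longrightarrow>
        nprod (map (\<lambda>l. t v - t l * adj (t l)) xs) = 0)"

type_synonym ('m, 'k) gpath = "('k \<Rightarrow> enat) \<times> (('k \<Rightarrow> nat) \<Rightarrow> ('k \<Rightarrow> nat) \<Rightarrow> 'm)"
type_synonym ('m, 'k) ptriple = "('m, 'k) gpath \<times> ('k \<Rightarrow> nat) \<times> ('k \<Rightarrow> nat)"

definition nle :: "('k \<Rightarrow> nat) \<Rightarrow> ('k \<Rightarrow> enat) \<Rightarrow> bool" where
  "nle p m \<longleftrightarrow> (\<forall>i. enat (p i) \<le> m i)"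

definition nmin :: "('k \<Rightarrow> nat) \<Rightarrow> ('k \<Rightarrow> enat) \<Rightarrow> ('k \<Rightarrow> nat)" where
  "nmin p m = (\<lambda>i. if enat (p i) \<le> m i then p i else the_enat (m i))"

definition basis :: "'k \<Rightarrow> 'k \<Rightarrow> nat" where
  "basis i = (\<lambda>j. if j = i then 1 else 0)"

text \<open>A degree-preserving functor x : Omega_{k,m} -> Lambda, with m = fst x and
  x((p,q)) = snd x p q (undefined outside the morphisms of Omega_{k,m}).\<close>
definition graph_morphism :: "('m, 'k::finite) kgraph \<Rightarrow> ('m, 'k) gpath \<Rightarrow> bool" where
  "graph_morphism G x \<longleftrightarrow>
     (\<forall>p q. \<not> (p \<le> q \<and> nle q (fst x)) \<longrightarrow> snd x p q = undefined) \<and>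
     (\<forall>p q. p \<le> q \<and> nle q (fst x) \<longrightarrow>
        snd x p q \<in> Mor G \<and> deg G (snd x p q) = q - p \<and>
        rng G (snd x p q) = snd x p p \<and> src G (snd x p q) = snd x q q) \<and>
     (\<forall>p. nle p (fst x) \<longrightarrow> snd x p p \<in> verts G) \<and>
     (\<forall>p q r. p \<le> q \<and> q \<le> r \<and> nle r (fst x) \<longrightarrow>
        cmp G (snd x p q) (snd x q r) = snd x p r)"

definition boundary_path :: "('m, 'k::finite) kgraph \<Rightarrow> ('m, 'k) gpath \<Rightarrow> bool" where
  "boundary_path G x \<longleftrightarrow> graph_morphism G x \<and>
     (\<exists>nx. nle nx (fst x) \<and>
        (\<forall>p i. nx \<le> p \<and> nle p (fst x) \<and> enat (p i) = fst x i \<longrightarrow>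
           \<not> (\<exists>l\<in>Mor G. rng G l = snd x p p \<and> deg G l = basis i)))"

definition shift :: "('k \<Rightarrow> nat) \<Rightarrow> ('m, 'k) gpath \<Rightarrow> ('m, 'k) gpath" where
  "shift p x = ((\<lambda>i. fst x i - enat (p i)),
     (\<lambda>a b. if a \<le> b \<and> nle b (\<lambda>i. fst x i - enat (p i)) then snd x (a + p) (b + p) else undefined))"

definition concat :: "('m, 'k::finite) kgraph \<Rightarrow> 'm \<Rightarrow> ('m, 'k) gpath \<Rightarrow> ('m, 'k) gpath" where
  "concat G l y = (THE z. graph_morphism G z \<and> fst z = (\<lambda>i. enat (deg G l i) + fst y i) \<and>
       snd z 0 (deg G l) = l \<and> shift (deg G l) z = y)"

definition Pset :: "('m, 'k::finite) kgraph \<Rightarrow> ('m, 'k) ptriple set" where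
  "Pset G = {(x, m, n). boundary_path G x \<and> m \<le> n \<and> \<not> nle n (fst x)}"

definition prel :: "('m, 'k::finite) kgraph \<Rightarrow> ('m, 'k) ptriple \<Rightarrow> ('m, 'k) ptriple \<Rightarrow> bool" where
  "prel G a b \<longleftrightarrow> a \<in> Pset G \<and> b \<in> Pset G \<and>
     (case a of (x, m, n) \<Rightarrow> case b of (y, p, q) \<Rightarrow>
        snd x (nmin m (fst x)) (nmin n (fst x)) = snd y (nmin p (fst y)) (nmin q (fst y)) \<and>
        m - nmin m (fst x) = p - nmin p (fst y) \<and> n - m = q - p)"

definition pclass :: "('m, 'k::finite) kgraph \<Rightarrow> ('m, 'k) ptriple \<Rightarrow> ('m, 'k) ptriple set" where
  "pclass G a = {b. prel G a b}"

definition Ptil :: "('m, 'k::finite) kgraph \<Rightarrow> ('m, 'k) ptriple set set" where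
  "Ptil G = pclass G ` Pset G"

definition rep :: "'a set \<Rightarrow> 'a" where
  "rep X = (SOME a. a \<in> X)"

text \<open>Morphisms of the extension: Inl lambda for lambda in Lambda, Inr [x;(m,n)].
  The vertex [x;m] of V~ is identified with its identity morphism [x;(m,m)].
  Operations on classes are computed on (arbitrarily chosen) representatives;
  composition of non-composable pairs is left undefined.\<close>
definition ext :: "('m, 'k::finite) kgraph \<Rightarrow> ('m + ('m, 'k) ptriple set, 'k) kgraph" where
  "ext G = \<lparr> Mor = Inl ` Mor G \<union> Inr ` Ptil G,
     rng = (\<lambda>u. case u of Inl l \<Rightarrow> Inl (rng G l)
             | Inr X \<Rightarrow> (case rep X of (x, m, n) \<Rightarrow>
                 if nle m (fst x) then Inl (snd x m m) else Inr (pclass G (x, m, m)))),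
     src = (\<lambda>u. case u of Inl l \<Rightarrow> Inl (src G l)
             | Inr X \<Rightarrow> (case rep X of (x, m, n) \<Rightarrow> Inr (pclass G (x, n, n)))),
     cmp = (\<lambda>u w. case u of
               Inl l \<Rightarrow> (case w of
                   Inl l' \<Rightarrow> Inl (cmp G l l')
                 | Inr Y \<Rightarrow> (case rep Y of (x, m, n) \<Rightarrow>
                     Inr (pclass G (concat G l (shift m x), 0, deg G l + n - m))))
             | Inr X \<Rightarrow> (case w of
                   Inl l' \<Rightarrow> undefined
                 | Inr Y \<Rightarrow> (case rep X of (x, m, n) \<Rightarrow> case rep Y of (y, p, q) \<Rightarrow>
                     Inr (pclass G (concat G (snd x 0 (nmin n (fst x))) (shift (nmin p (fst y)) y),
                                    m, n + q - p))))),
     deg = (\<lambda>u. case u of Inl l \<Rightarrow> deg G l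
             | Inr X \<Rightarrow> (case rep X of (x, m, n) \<Rightarrow> n - m)) \<rparr>"

end

theory Submission
  imports Defs
begin

text \<open>\<open>\<Lambda>\<close> sits in its extension as a subcategory with the same degrees, so (TCK1) and (TCK2)
  restrict at once. For (TCK3) two paths of \<open>\<Lambda>\<close> must have no new minimal common extensions: an
  extension through a new morphism \<open>[z; (0, N)]\<close> exhibits both paths as initial segments of the
  boundary path \<open>z\<close>, which forces \<open>N \<le> d(z)\<close>, impossible for a new morphism. For (CK) a finite
  exhaustive set \<open>E \<subseteq> v\<Lambda>\<close> must stay exhaustive: a new morphism \<open>[x; (m, n)]\<close> with range \<open>v\<close>
  starts along the boundary path \<open>\<sigma>\<^bsup>m\<^esup>x\<close>, which runs through some \<open>\<lambda> \<in> E\<close>, and then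
  \<open>\<lambda> [x; (m + d(\<lambda>), N)] = [x; (m, n)] [x; (n, N)]\<close> with \<open>N = n \<or> (m + d(\<lambda>))\<close> is a minimal
  common extension.\<close>

section \<open>Arithmetic of degrees\<close>

lemma zero_le_deg [simp]: "(0::'k \<Rightarrow> nat) \<le> q"
  by (simp add: le_fun_def)

lemma le_add_diff_inverse_fun: "(p::'k \<Rightarrow> nat) \<le> q \<Longrightarrow> p + (q - p) = q"
  by (auto simp: fun_eq_iff le_fun_def)

lemma le_add_diff_inverse2_fun: "(p::'k \<Rightarrow> nat) \<le> q \<Longrightarrow> (q - p) + p = q"
  by (auto simp: fun_eq_iff le_fun_def)

lemma diff_add_diff_fun: "(p::'k \<Rightarrow> nat) \<le> q \<Longrightarrow> q \<le> r \<Longrightarrow> (q - p) + (r - q) = r - p"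
  by (auto simp: fun_eq_iff le_fun_def)

lemma add_le_imp_le_diff_fun: "(d::'k \<Rightarrow> nat) + n \<le> p \<Longrightarrow> n \<le> p - d"
proof (rule le_funI)
  show "n i \<le> (p - d) i" if "d + n \<le> p" for i
    using le_funD[OF that, of i] by simp
qed

lemma diff_mono_fun: "(Q::'k \<Rightarrow> nat) \<le> Q' \<Longrightarrow> Q - d \<le> Q' - d"
  by (auto simp: le_fun_def diff_le_mono)

lemma le_add_fun: "(d::'k \<Rightarrow> nat) \<le> d + n" "(d::'k \<Rightarrow> nat) \<le> n + d"
  by (auto simp: le_fun_def)

lemma nle_zero [simp]: "nle 0 m"
  by (simp add: nle_def zero_enat_def[symmetric])

lemma le_nle_trans: "p \<le> q \<Longrightarrow> nle q m \<Longrightarrow> nle p m"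
  unfolding nle_def le_fun_def by (meson enat_ord_simps(1) order_trans)

lemma nle_sup: "nle q m \<Longrightarrow> nle d m \<Longrightarrow> nle (sup q d) m"
  unfolding nle_def by (simp add: sup_max max_def)

lemma nle_shifted_iff:
  assumes "nle p m"
  shows "nle b (\<lambda>i. m i - enat (p i)) \<longleftrightarrow> nle (b + p) m"
proof -
  have "enat (b i) \<le> m i - enat (p i) \<longleftrightarrow> enat (b i + p i) \<le> m i" for i
    using assms[unfolded nle_def, rule_format, of i] by (cases "m i") auto
  then show ?thesis unfolding nle_def by simp
qed

lemma nle_add_left_iff:
  assumes "(d::'k \<Rightarrow> nat) \<le> Q"
  shows "nle Q (\<lambda>i. enat (d i) + y i) \<longleftrightarrow> nle (Q - d) y"
proof -
  have "enat (Q i) \<le> enat (d i) + y i \<longleftrightarrow> enat (Q i - d i) \<le> y i" for i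
    using le_funD[OF assms, of i] by (cases "y i") auto
  then show ?thesis unfolding nle_def by simp
qed

lemma nle_add_left: "nle d (\<lambda>i. enat (d i) + y i)"
  unfolding nle_def by (metis add.right_neutral add_left_mono zero_le)

lemma nle_add_mono: "nle Q y \<Longrightarrow> nle (d + Q) (\<lambda>i. enat (d i) + y i)"
  unfolding nle_def by (metis add_left_mono plus_enat_simps(1) plus_fun_apply)

lemma enat_add_diff_cancel_left: "(\<lambda>i. enat (d i) + y i - enat (d i)) = y"
proof
  show "enat (d i) + y i - enat (d i) = y i" for i by (cases "y i") auto
qed

lemma nmin_apply: "nmin p m i = (if enat (p i) \<le> m i then p i else the_enat (m i))"
  by (simp add: nmin_def)

lemma nmin_nle: "nle (nmin p m) m"
  unfolding nle_def
proof
  show "enat (nmin p m i) \<le> m i" for i unfolding nmin_apply by (cases "m i") auto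
qed

lemma nmin_le: "nmin p m \<le> p"
proof (rule le_funI)
  show "nmin p m i \<le> p i" for i unfolding nmin_apply by (cases "m i") auto
qed

lemma le_nmin:
  assumes "d \<le> p" "nle d m"
  shows "d \<le> nmin p m"
proof (rule le_funI)
  fix i
  have "d i \<le> p i" "enat (d i) \<le> m i" using assms by (auto simp: le_fun_def nle_def)
  then show "d i \<le> nmin p m i" unfolding nmin_apply by (cases "m i") auto
qed

lemma nmin_eq_self [simp]: "nle p m \<Longrightarrow> nmin p m = p"
  unfolding nle_def by (simp add: fun_eq_iff nmin_apply)

lemma nle_iff_le_nmin: "nle p m \<longleftrightarrow> p \<le> nmin p m"
proof
  assume le: "p \<le> nmin p m"
  show "nle p m" unfolding nle_def
  proof
    fix i
    have "p i \<le> nmin p m i" using le by (rule le_funD)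
    then show "enat (p i) \<le> m i" unfolding nmin_apply by (cases "m i") (auto split: if_splits)
  qed
qed simp

lemma diff_nmin_eq_0_iff: "p - nmin p m = 0 \<longleftrightarrow> nle p m"
proof -
  have "p - nmin p m = 0 \<longleftrightarrow> p \<le> nmin p m"
    by (auto simp: le_fun_def fun_eq_iff)
  then show ?thesis by (simp add: nle_iff_le_nmin)
qed

lemma nmin_mono:
  assumes "p \<le> q"
  shows "nmin p m \<le> nmin q m"
proof (rule le_funI)
  fix i
  have "p i \<le> q i" using assms by (rule le_funD)
  then show "nmin p m i \<le> nmin q m i" unfolding nmin_apply by (cases "m i") auto
qed

text \<open>In the next four lemmas \<open>\<lambda>i. enat (nmin n X i) + (Y i - enat (nmin p Y i))\<close> is the degree of
  the concatenation \<open>x(0, n \<and> X) \<sigma>\<^bsup>p \<and> Y\<^esup> y\<close> of paths of degrees \<open>X\<close> and \<open>Y\<close>, and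
  \<open>\<lambda>i. enat (d i) + (X i - enat (m i))\<close> is that of \<open>l \<sigma>\<^bsup>m\<^esup> x\<close> with \<open>d(l) = d\<close>.\<close>

lemma nmin_concat_shift:
  assumes "m \<le> n" "p \<le> q" "n - nmin n X = p - nmin p Y"
  defines "Z \<equiv> \<lambda>i. enat (nmin n X i) + (Y i - enat (nmin p Y i))"
  shows "nmin m Z = nmin m X" "nmin (n + q - p) Z = nmin n X + (nmin q Y - nmin p Y)"
proof -
  have *: "m i \<le> n i" "p i \<le> q i" "n i - nmin n X i = p i - nmin p Y i" for i
    using le_funD[OF assms(1)] le_funD[OF assms(2)] fun_cong[OF assms(3), of i] by simp_all
  have "nmin m Z i = nmin m X i \<and> nmin (n + q - p) Z i = nmin n X i + (nmin q Y i - nmin p Y i)"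
    for i using *[of i] unfolding Z_def nmin_apply
    by (cases "X i"; cases "Y i"; auto split: if_splits)
  then show "nmin m Z = nmin m X" "nmin (n + q - p) Z = nmin n X + (nmin q Y - nmin p Y)"
    by (simp_all add: fun_eq_iff)
qed

lemma nmin_concat_shift_left:
  assumes "m \<le> n" "nle m X"
  shows "nmin (d + n - m) (\<lambda>i. enat (d i) + (X i - enat (m i))) = d + (nmin n X - m)"
proof -
  have *: "m i \<le> n i" "enat (m i) \<le> X i" for i
    using le_funD[OF assms(1)] assms(2) unfolding nle_def by auto
  have "nmin (d + n - m) (\<lambda>i. enat (d i) + (X i - enat (m i))) i = d i + (nmin n X i - m i)" for i
    using *[of i] unfolding nmin_apply by (cases "X i") auto
  then show ?thesis by (simp add: fun_eq_iff)
qed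

lemma not_nle_concat_shift:
  assumes "p \<le> q" "n - nmin n X = p - nmin p Y" "\<not> nle q Y"
  shows "\<not> nle (n + q - p) (\<lambda>i. enat (nmin n X i) + (Y i - enat (nmin p Y i)))"
proof
  obtain i where i: "\<not> enat (q i) \<le> Y i" using assms(3) by (auto simp: nle_def)
  have "p i \<le> q i" "n i - nmin n X i = p i - nmin p Y i"
    using le_funD[OF assms(1), of i] fun_cong[OF assms(2), of i] by simp_all
  moreover assume "nle (n + q - p) (\<lambda>i. enat (nmin n X i) + (Y i - enat (nmin p Y i)))"
  then have "enat (n i + q i - p i) \<le> enat (nmin n X i) + (Y i - enat (nmin p Y i))"
    by (auto simp: nle_def)
  ultimately show False using i unfolding nmin_apply
    by (cases "X i"; cases "Y i"; auto split: if_splits)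
qed

lemma not_nle_concat_shift_left:
  assumes "m \<le> n" "nle m X" "\<not> nle n X"
  shows "\<not> nle (d + n - m) (\<lambda>i. enat (d i) + (X i - enat (m i)))"
proof
  obtain i where i: "\<not> enat (n i) \<le> X i" using assms(3) by (auto simp: nle_def)
  have "m i \<le> n i" "enat (m i) \<le> X i" using le_funD[OF assms(1), of i] assms(2) by (auto simp: nle_def)
  moreover assume "nle (d + n - m) (\<lambda>i. enat (d i) + (X i - enat (m i)))"
  then have "enat (d i + n i - m i) \<le> enat (d i) + (X i - enat (m i))" by (auto simp: nle_def)
  ultimately show False using i by (cases "X i") auto
qed

lemma diff_nmin_eq:
  assumes "m \<le> n"
  shows "n - nmin n X = (m - nmin m X) + (n - m) - (nmin n X - nmin m X)"
proof
  fix i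
  have "m i \<le> n i" "nmin m X i \<le> nmin n X i" "nmin m X i \<le> m i" "nmin n X i \<le> n i"
    using le_funD[OF assms, of i] le_funD[OF nmin_mono[OF assms, of X], of i]
      le_funD[OF nmin_le[of m X], of i] le_funD[OF nmin_le[of n X], of i] by simp_all
  then show "(n - nmin n X) i = (m - nmin m X + (n - m) - (nmin n X - nmin m X)) i" by simp
qed

lemma sup_add_diff_fun: "(m::'k \<Rightarrow> nat) \<le> n \<Longrightarrow> sup n (d + m) - m = sup d (n - m)"
proof
  show "(sup n (d + m) - m) i = sup d (n - m) i" if "m \<le> n" for i
    using le_funD[OF that, of i] by (auto simp: sup_nat_def max_def)
qed

lemma basis_le_diff: "(m::'k \<Rightarrow> nat) i < e i \<Longrightarrow> basis i \<le> e - m"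
  unfolding le_fun_def basis_def by auto


section \<open>Factorisation in a k-graph\<close>

locale k_graph =
  fixes G :: "('m, 'k::finite) kgraph"
  assumes kgraph: "kgraph G"
begin

lemma rng_in_Mor: "l \<in> Mor G \<Longrightarrow> rng G l \<in> Mor G"
  and src_in_Mor: "l \<in> Mor G \<Longrightarrow> src G l \<in> Mor G"
  and rng_rng [simp]: "l \<in> Mor G \<Longrightarrow> rng G (rng G l) = rng G l"
  and src_rng [simp]: "l \<in> Mor G \<Longrightarrow> src G (rng G l) = rng G l"
  and rng_src [simp]: "l \<in> Mor G \<Longrightarrow> rng G (src G l) = src G l"
  and src_src [simp]: "l \<in> Mor G \<Longrightarrow> src G (src G l) = src G l"
  and cmp_rng_left [simp]: "l \<in> Mor G \<Longrightarrow> cmp G (rng G l) l = l"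
  and cmp_src_right [simp]: "l \<in> Mor G \<Longrightarrow> cmp G l (src G l) = l"
  using kgraph unfolding kgraph_def by blast+

lemma
  assumes "l \<in> Mor G" "u \<in> Mor G" "src G l = rng G u"
  shows cmp_in_Mor: "cmp G l u \<in> Mor G"
    and rng_cmp [simp]: "rng G (cmp G l u) = rng G l"
    and src_cmp [simp]: "src G (cmp G l u) = src G u"
    and deg_cmp [simp]: "deg G (cmp G l u) = deg G l + deg G u"
  using kgraph assms unfolding kgraph_def by blast+

lemma cmp_assoc:
  assumes "l \<in> Mor G" "u \<in> Mor G" "w \<in> Mor G" "src G l = rng G u" "src G u = rng G w"
  shows "cmp G (cmp G l u) w = cmp G l (cmp G u w)"
  using kgraph assms unfolding kgraph_def by blast

lemma factorisation_exists:
  assumes "l \<in> Mor G" "deg G l = m + n"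
  obtains a b where "a \<in> Mor G" "b \<in> Mor G" "src G a = rng G b" "deg G a = m" "deg G b = n"
    "cmp G a b = l"
  using kgraph assms unfolding kgraph_def by metis

lemma factorisation_unique:
  assumes "a \<in> Mor G" "b \<in> Mor G" "src G a = rng G b"
    "a' \<in> Mor G" "b' \<in> Mor G" "src G a' = rng G b'"
    "deg G a = deg G a'" "deg G b = deg G b'" "cmp G a b = cmp G a' b'"
  shows "a = a' \<and> b = b'"
proof -
  have "cmp G a b \<in> Mor G" "deg G (cmp G a b) = deg G a + deg G b"
    using assms by simp_all (rule cmp_in_Mor)
  then have "\<exists>!p. fst p \<in> Mor G \<and> snd p \<in> Mor G \<and> src G (fst p) = rng G (snd p) \<and>
      deg G (fst p) = deg G a \<and> deg G (snd p) = deg G b \<and> cmp G (fst p) (snd p) = cmp G a b"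
    using kgraph unfolding kgraph_def by blast
  then have "(a, b) = (a', b')" using assms by (metis fst_conv snd_conv)
  then show ?thesis by simp
qed

lemma deg_rng [simp]: "l \<in> Mor G \<Longrightarrow> deg G (rng G l) = 0"
  using deg_cmp[of "rng G l" l] rng_in_Mor[of l] by simp

lemma deg_src [simp]: "l \<in> Mor G \<Longrightarrow> deg G (src G l) = 0"
  using deg_cmp[of l "src G l"] src_in_Mor[of l] by simp

lemma rng_eq_self_if_deg_0:
  assumes "l \<in> Mor G" "deg G l = 0"
  shows "rng G l = l"
  using factorisation_unique[of "rng G l" l l "src G l"] assms rng_in_Mor src_in_Mor by simp

lemma verts_iff: "v \<in> verts G \<longleftrightarrow> v \<in> Mor G \<and> deg G v = 0"
  unfolding verts_def using rng_eq_self_if_deg_0 rng_in_Mor by (metis deg_rng image_iff)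

text \<open>\<open>factor w p q\<close> is the segment \<open>w(p, q)\<close> of \<open>w\<close>, viewing \<open>w\<close> as a graph morphism
  \<open>\<Omega>\<^sub>k\<^sub>,\<^sub>d\<^sub>(\<^sub>w\<^sub>) \<rightarrow> \<Lambda>\<close>.\<close>

definition factor :: "'m \<Rightarrow> ('k \<Rightarrow> nat) \<Rightarrow> ('k \<Rightarrow> nat) \<Rightarrow> 'm" where
  "factor w p q = (THE c. \<exists>a b. a \<in> Mor G \<and> b \<in> Mor G \<and> c \<in> Mor G \<and> src G a = rng G c \<and>
      src G c = rng G b \<and> deg G a = p \<and> deg G c = q - p \<and> cmp G a (cmp G c b) = w)"

lemma factor_eqI:
  assumes "a \<in> Mor G" "b \<in> Mor G" "c \<in> Mor G" "src G a = rng G c" "src G c = rng G b"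
    "deg G a = p" "deg G c = q - p" "cmp G a (cmp G c b) = w"
  shows "factor w p q = c"
  unfolding factor_def
proof (rule the_equality)
  fix c' assume "\<exists>a' b'. a' \<in> Mor G \<and> b' \<in> Mor G \<and> c' \<in> Mor G \<and> src G a' = rng G c' \<and>
      src G c' = rng G b' \<and> deg G a' = p \<and> deg G c' = q - p \<and> cmp G a' (cmp G c' b') = w"
  then obtain a' b' where c': "a' \<in> Mor G" "b' \<in> Mor G" "c' \<in> Mor G" "src G a' = rng G c'"
      "src G c' = rng G b'" "deg G a' = p" "deg G c' = q - p" "cmp G a' (cmp G c' b') = w"
    by blast
  have "deg G (cmp G c' b') = deg G (cmp G c b)"
    using assms c' deg_cmp cmp_in_Mor rng_cmp by (metis add_left_cancel)
  then have "a' = a \<and> cmp G c' b' = cmp G c b"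
    using factorisation_unique[of a' "cmp G c' b'" a "cmp G c b"] assms c' cmp_in_Mor by simp
  moreover from this have "deg G b' = deg G b"
    using assms c' by (metis add_left_cancel deg_cmp)
  ultimately show "c' = c"
    using factorisation_unique[of c' b' c b] assms c' by simp
qed (use assms in blast)

lemma factor_decomp:
  assumes "w \<in> Mor G" "p \<le> q" "q \<le> deg G w"
  obtains a b where "a \<in> Mor G" "b \<in> Mor G" "factor w p q \<in> Mor G"
    "src G a = rng G (factor w p q)" "src G (factor w p q) = rng G b" "deg G a = p"
    "deg G (factor w p q) = q - p" "deg G b = deg G w - q" "cmp G a (cmp G (factor w p q) b) = w"
proof -
  have "deg G w = p + (deg G w - p)"
    using assms le_add_diff_inverse_fun order_trans by metis
  then obtain a r where ar: "a \<in> Mor G" "r \<in> Mor G" "src G a = rng G r"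
      "deg G a = p" "deg G r = deg G w - p" "cmp G a r = w"
    using factorisation_exists assms(1) by metis
  have "deg G r = (q - p) + (deg G w - q)"
    using ar assms by (auto simp: fun_eq_iff le_fun_def)
  then obtain c b where cb: "c \<in> Mor G" "b \<in> Mor G" "src G c = rng G b"
      "deg G c = q - p" "deg G b = deg G w - q" "cmp G c b = r"
    using factorisation_exists ar(2) by metis
  have "rng G r = rng G c" using cb by auto
  moreover have "factor w p q = c"
    using ar cb calculation by (intro factor_eqI[of a b]) auto
  ultimately show ?thesis using that ar cb by auto
qed

lemma factor_in_Mor: "w \<in> Mor G \<Longrightarrow> p \<le> q \<Longrightarrow> q \<le> deg G w \<Longrightarrow> factor w p q \<in> Mor G"
  and deg_factor: "w \<in> Mor G \<Longrightarrow> p \<le> q \<Longrightarrow> q \<le> deg G w \<Longrightarrow> deg G (factor w p q) = q - p"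
  by (metis factor_decomp)+

lemma factor_whole: "w \<in> Mor G \<Longrightarrow> factor w 0 (deg G w) = w"
  by (rule factor_eqI[of "rng G w" "src G w"]) (simp_all add: rng_in_Mor src_in_Mor)

lemma factor_cmp_factor:
  assumes "w \<in> Mor G" "p \<le> q" "q \<le> r" "r \<le> deg G w"
  shows "src G (factor w p q) = rng G (factor w q r)"
    and "cmp G (factor w p q) (factor w q r) = factor w p r"
proof -
  obtain a b1 where ab: "a \<in> Mor G" "b1 \<in> Mor G" "factor w p q \<in> Mor G"
      "src G a = rng G (factor w p q)" "src G (factor w p q) = rng G b1" "deg G a = p"
      "deg G (factor w p q) = q - p" "deg G b1 = deg G w - q"
      "cmp G a (cmp G (factor w p q) b1) = w"
    using factor_decomp[OF assms(1,2)] assms(3,4) order_trans by blast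
  define c1 where "c1 = factor w p q"
  have "deg G b1 = (r - q) + (deg G w - r)"
    using ab assms by (auto simp: fun_eq_iff le_fun_def)
  then obtain c2 b2 where cb: "c2 \<in> Mor G" "b2 \<in> Mor G" "src G c2 = rng G b2"
      "deg G c2 = r - q" "deg G b2 = deg G w - r" "cmp G c2 b2 = b1"
    using factorisation_exists ab(2) by metis
  have c1c2: "src G c1 = rng G c2" using ab cb c1_def by auto
  have "cmp G c1 b1 = cmp G (cmp G c1 c2) b2"
    using cmp_assoc[of c1 c2 b2] ab cb c1c2 c1_def by auto
  then have "factor w p r = cmp G c1 c2"
    using ab cb c1c2 c1_def assms diff_add_diff_fun[of p q r]
    by (intro factor_eqI[of a b2]) (auto intro: cmp_in_Mor)
  moreover have "factor w q r = c2"
  proof (rule factor_eqI[of "cmp G a c1" b2])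
    show "cmp G (cmp G a c1) (cmp G c2 b2) = w"
      using cmp_assoc[of a c1 "cmp G c2 b2"] ab cb c1_def by auto
    show "deg G (cmp G a c1) = q"
      using ab c1_def assms le_add_diff_inverse_fun[of p q] by simp
  qed (use ab cb c1c2 c1_def in \<open>auto intro: cmp_in_Mor\<close>)
  ultimately show "src G (factor w p q) = rng G (factor w q r)"
    and "cmp G (factor w p q) (factor w q r) = factor w p r"
    using c1_def c1c2 by auto
qed

lemma rng_factor:
  assumes "w \<in> Mor G" "p \<le> q" "q \<le> deg G w"
  shows "rng G (factor w p q) = factor w p p"
proof -
  have "p \<le> deg G w" using assms order_trans by blast
  then have "factor w p p \<in> Mor G" "deg G (factor w p p) = 0"
    using assms(1) by (simp_all add: factor_in_Mor deg_factor)
  then have "src G (factor w p p) = factor w p p"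
    using rng_eq_self_if_deg_0 src_rng by metis
  then show ?thesis using factor_cmp_factor(1)[of w p p q] assms by simp
qed

lemma src_factor:
  assumes "w \<in> Mor G" "p \<le> q" "q \<le> deg G w"
  shows "src G (factor w p q) = factor w q q"
proof -
  have "factor w q q \<in> Mor G" "deg G (factor w q q) = 0"
    using assms(1,3) by (simp_all add: factor_in_Mor deg_factor)
  then have "rng G (factor w q q) = factor w q q" by (rule rng_eq_self_if_deg_0)
  then show ?thesis using factor_cmp_factor(1)[of w p q q] assms by simp
qed

lemma factor_cmp_left:
  assumes "a \<in> Mor G" "b \<in> Mor G" "src G a = rng G b" "p \<le> q" "q \<le> deg G a"
  shows "factor (cmp G a b) p q = factor a p q"
proof -
  obtain a1 a2 where f: "a1 \<in> Mor G" "a2 \<in> Mor G" "factor a p q \<in> Mor G"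
      "src G a1 = rng G (factor a p q)" "src G (factor a p q) = rng G a2" "deg G a1 = p"
      "deg G (factor a p q) = q - p" "cmp G a1 (cmp G (factor a p q) a2) = a"
    using factor_decomp[OF assms(1,4,5)] by metis
  define c where "c = factor a p q"
  have "src G a = src G (cmp G a1 (cmp G c a2))" using f(8) c_def by simp
  also have "\<dots> = src G a2" using f(1-7) c_def by (simp add: cmp_in_Mor)
  finally have a2b: "src G a2 = rng G b" using assms(3) by simp
  have "cmp G a b = cmp G a1 (cmp G (cmp G c a2) b)"
    using cmp_assoc[of a1 "cmp G c a2" b] f assms c_def a2b by (simp add: cmp_in_Mor)
  also have "cmp G (cmp G c a2) b = cmp G c (cmp G a2 b)"
    using cmp_assoc[of c a2 b] f assms c_def a2b by simp
  finally show ?thesis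
    unfolding c_def[symmetric] using f a2b assms c_def
    by (intro factor_eqI[of a1 "cmp G a2 b"]) (simp_all add: cmp_in_Mor)
qed

lemma initial_factor_if_MCE:
  assumes "(a, b) \<in> MCE G l mu" "l \<in> Mor G" "mu \<in> Mor G" "deg G l \<le> deg G mu"
  shows "factor mu 0 (deg G l) = l"
proof -
  have A: "a \<in> Mor G" "b \<in> Mor G" "src G l = rng G a" "src G mu = rng G b"
      "cmp G l a = cmp G mu b" "deg G (cmp G l a) = sup (deg G l) (deg G mu)"
    using assms(1) unfolding MCE_def by blast+
  have "deg G b = 0" using deg_cmp[OF assms(3) A(2,4)] A(5,6) assms(4) by (simp add: sup_absorb2)
  then have "b = src G mu" using rng_eq_self_if_deg_0[OF A(2)] A(4) by simp
  then have "cmp G l a = mu" using A(5) assms(3) by simp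
  moreover from this have "rng G l = rng G mu" using rng_cmp[OF assms(2) A(1,3)] by simp
  ultimately show ?thesis
    using A assms(2,3) by (intro factor_eqI[of "rng G l" a]) (simp_all add: rng_in_Mor)
qed

lemma factor_cmp_right:
  assumes "a \<in> Mor G" "b \<in> Mor G" "src G a = rng G b" "p \<le> q" "q \<le> deg G b"
  shows "factor (cmp G a b) (deg G a + p) (deg G a + q) = factor b p q"
proof -
  obtain b1 b2 where f: "b1 \<in> Mor G" "b2 \<in> Mor G" "factor b p q \<in> Mor G"
      "src G b1 = rng G (factor b p q)" "src G (factor b p q) = rng G b2" "deg G b1 = p"
      "deg G (factor b p q) = q - p" "cmp G b1 (cmp G (factor b p q) b2) = b"
    using factor_decomp[OF assms(2,4,5)] by metis
  define c where "c = factor b p q"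
  have "rng G b = rng G (cmp G b1 (cmp G c b2))" using f(8) c_def by simp
  also have "\<dots> = rng G b1" using f(1-7) c_def by (simp add: cmp_in_Mor)
  finally have ab1: "src G a = rng G b1" using assms(3) by simp
  have "cmp G a b = cmp G (cmp G a b1) (cmp G c b2)"
    using cmp_assoc[of a b1 "cmp G c b2"] f c_def ab1 assms by (simp add: cmp_in_Mor)
  then show ?thesis
    unfolding c_def[symmetric] using f ab1 assms c_def
    by (intro factor_eqI[of "cmp G a b1" b2]) (simp_all add: cmp_in_Mor)
qed

end

section \<open>Paths: shifting and concatenation\<close>

lemma fst_shift: "fst (shift p x) = (\<lambda>i. fst x i - enat (p i))"
  by (simp add: shift_def)

lemma shift_apply: "a \<le> b \<Longrightarrow> nle b (fst (shift p x)) \<Longrightarrow> snd (shift p x) a b = snd x (a + p) (b + p)"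
  by (simp add: shift_def)

lemma boundary_path_graph_morphism: "boundary_path G x \<Longrightarrow> graph_morphism G x"
  by (simp add: boundary_path_def)

context k_graph
begin

lemma graph_morphismD:
  assumes "graph_morphism G x" "p \<le> q" "nle q (fst x)"
  shows "snd x p q \<in> Mor G" "deg G (snd x p q) = q - p" "rng G (snd x p q) = snd x p p"
    "src G (snd x p q) = snd x q q"
  using assms(1)[unfolded graph_morphism_def, THEN conjunct2, THEN conjunct1, rule_format,
      OF conjI[OF assms(2,3)]]
  by simp_all

lemma graph_morphism_undefined:
  "graph_morphism G x \<Longrightarrow> \<not> (p \<le> q \<and> nle q (fst x)) \<Longrightarrow> snd x p q = undefined"
  unfolding graph_morphism_def by simp

lemma graph_morphism_vertex: "graph_morphism G x \<Longrightarrow> nle p (fst x) \<Longrightarrow> snd x p p \<in> verts G"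
  unfolding graph_morphism_def by simp

lemma graph_morphism_cmp:
  "graph_morphism G x \<Longrightarrow> p \<le> q \<Longrightarrow> q \<le> r \<Longrightarrow> nle r (fst x) \<Longrightarrow>
    cmp G (snd x p q) (snd x q r) = snd x p r"
  unfolding graph_morphism_def by simp

lemma factor_graph_morphism:
  assumes x: "graph_morphism G x" and "p \<le> q" "q \<le> r" "nle r (fst x)"
  shows "factor (snd x 0 r) p q = snd x p q"
proof -
  have "nle q (fst x)" "nle p (fst x)" using assms le_nle_trans by blast+
  then have "snd x 0 r = cmp G (snd x 0 p) (cmp G (snd x p q) (snd x q r))"
    using graph_morphism_cmp[OF x zero_le_deg, of p r] graph_morphism_cmp[OF x, of p q r] assms
      order_trans[of p q r] by simp
  with \<open>nle q (fst x)\<close> \<open>nle p (fst x)\<close> show ?thesis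
    using assms graph_morphismD[OF x] by (intro factor_eqI[of "snd x 0 p" "snd x q r"]) simp_all
qed

lemma graph_morphism_shift:
  assumes x: "graph_morphism G x" and p: "nle p (fst x)"
  shows "graph_morphism G (shift p x)"
  unfolding graph_morphism_def
proof (intro conjI allI impI)
  fix a b assume "\<not> (a \<le> b \<and> nle b (fst (shift p x)))"
  then show "snd (shift p x) a b = undefined" by (auto simp: shift_def)
next
  fix a b assume ab: "a \<le> b \<and> nle b (fst (shift p x))"
  have "a + p \<le> b + p" using ab by (simp add: add_right_mono)
  moreover have "nle (b + p) (fst x)" using ab nle_shifted_iff[OF p] by (simp add: fst_shift)
  moreover have "nle (a + p) (fst x)" using calculation le_nle_trans by blast
  moreover have "nle a (fst (shift p x))" using calculation nle_shifted_iff[OF p] by (simp add: fst_shift)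
  ultimately show "snd (shift p x) a b \<in> Mor G" "deg G (snd (shift p x) a b) = b - a"
    "rng G (snd (shift p x) a b) = snd (shift p x) a a"
    "src G (snd (shift p x) a b) = snd (shift p x) b b"
    using graph_morphismD[OF x] ab by (simp_all add: shift_apply)
next
  fix a assume "nle a (fst (shift p x))"
  then show "snd (shift p x) a a \<in> verts G"
    using graph_morphism_vertex[OF x] nle_shifted_iff[OF p] by (simp add: fst_shift shift_apply)
next
  fix a b c assume abc: "a \<le> b \<and> b \<le> c \<and> nle c (fst (shift p x))"
  then have "nle (c + p) (fst x)" using nle_shifted_iff[OF p] by (simp add: fst_shift)
  moreover have "b + p \<le> c + p" using abc by (simp add: add_right_mono)
  ultimately have "nle (b + p) (fst x)" using le_nle_trans by blast
  then have "nle b (fst (shift p x))" using nle_shifted_iff[OF p] by (simp add: fst_shift)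
  with \<open>nle (c + p) (fst x)\<close> show "cmp G (snd (shift p x) a b) (snd (shift p x) b c) = snd (shift p x) a c"
    using graph_morphism_cmp[OF x, of "a + p" "b + p" "c + p"] abc order_trans[of a b c]
    by (simp add: shift_apply add_right_mono)
qed

lemma boundary_path_shift:
  assumes x: "boundary_path G x" and p: "nle p (fst x)"
  shows "boundary_path G (shift p x)"
proof -
  obtain nx where nx: "nle nx (fst x)" "\<forall>q i. nx \<le> q \<and> nle q (fst x) \<and> enat (q i) = fst x i \<longrightarrow>
      \<not> (\<exists>l\<in>Mor G. rng G l = snd x q q \<and> deg G l = basis i)"
    using x unfolding boundary_path_def by blast
  have "nle (nx - p) (fst (shift p x))"
    unfolding fst_shift nle_def
  proof
    fix i
    have "enat (nx i) \<le> fst x i" "enat (p i) \<le> fst x i" using nx(1) p unfolding nle_def by auto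
    then show "enat ((nx - p) i) \<le> fst x i - enat (p i)" by (cases "fst x i") auto
  qed
  moreover have "\<not> (\<exists>l\<in>Mor G. rng G l = snd (shift p x) q q \<and> deg G l = basis i)"
    if q: "nx - p \<le> q" "nle q (fst (shift p x))" "enat (q i) = fst (shift p x) i" for q i
  proof -
    have "nx \<le> q + p"
    proof (rule le_funI)
      show "nx j \<le> (q + p) j" for j using le_funD[OF q(1), of j] by simp
    qed
    moreover have "nle (q + p) (fst x)" using q(2) nle_shifted_iff[OF p] by (simp add: fst_shift)
    moreover have "enat ((q + p) i) = fst x i"
      using q(3) p[unfolded nle_def, rule_format, of i] by (cases "fst x i") (auto simp: fst_shift)
    ultimately show ?thesis using nx(2)[rule_format, of "q + p" i] q shift_apply[of q q p x] by auto
  qed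
  ultimately show ?thesis
    unfolding boundary_path_def using graph_morphism_shift[OF boundary_path_graph_morphism[OF x] p] by blast
qed

text \<open>\<open>concat\<close> is a definite description, so it has to be constructed: the segment \<open>(p, q)\<close> of
  \<open>l y\<close> is read off the morphism \<open>l y(0, Q - d(l))\<close> for any large enough \<open>Q\<close>.\<close>

definition concat_prefix :: "'m \<Rightarrow> ('m, 'k) gpath \<Rightarrow> ('k \<Rightarrow> nat) \<Rightarrow> 'm" where
  "concat_prefix l y Q = cmp G l (snd y 0 (Q - deg G l))"

definition concat_path :: "'m \<Rightarrow> ('m, 'k) gpath \<Rightarrow> ('m, 'k) gpath" where
  "concat_path l y = ((\<lambda>i. enat (deg G l i) + fst y i),
     (\<lambda>p q. if p \<le> q \<and> nle q (\<lambda>i. enat (deg G l i) + fst y i)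
        then factor (concat_prefix l y (sup q (deg G l))) p q else undefined))"

lemma fst_concat_path: "fst (concat_path l y) = (\<lambda>i. enat (deg G l i) + fst y i)"
  by (simp add: concat_path_def)

context
  fixes l y
  assumes l: "l \<in> Mor G" and y: "graph_morphism G y" "snd y 0 0 = src G l"
begin

lemma concat_prefix_in_Mor:
  assumes "deg G l \<le> Q" "nle (Q - deg G l) (fst y)"
  shows "concat_prefix l y Q \<in> Mor G" "deg G (concat_prefix l y Q) = Q"
  using graph_morphismD[OF y(1) zero_le_deg assms(2)] l y(2) le_add_diff_inverse_fun[OF assms(1)]
  by (simp_all add: concat_prefix_def cmp_in_Mor)

lemma factor_concat_prefix_mono:
  assumes Q: "deg G l \<le> Q" "Q \<le> Q'" "nle (Q' - deg G l) (fst y)" and pq: "p \<le> q" "q \<le> Q"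
  shows "factor (concat_prefix l y Q') p q = factor (concat_prefix l y Q) p q"
proof -
  define d where "d = deg G l"
  have le: "Q - d \<le> Q' - d" using diff_mono_fun Q by blast
  have nQ: "nle (Q - d) (fst y)" using le_nle_trans[OF le] Q d_def by blast
  note y1 = graph_morphismD[OF y(1) zero_le_deg nQ] and y2 = graph_morphismD[OF y(1) le Q(3)[folded d_def]]
  have "concat_prefix l y Q' = cmp G (concat_prefix l y Q) (snd y (Q - d) (Q' - d))"
    using graph_morphism_cmp[OF y(1) zero_le_deg le Q(3)[folded d_def]] cmp_assoc[OF l y1(1) y2(1)]
      y1 y2 y(2) by (simp add: concat_prefix_def d_def)
  moreover have "src G (concat_prefix l y Q) = rng G (snd y (Q - d) (Q' - d))"
    using y1 y2 y(2) l by (simp add: concat_prefix_def d_def)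
  ultimately show ?thesis
    using factor_cmp_left[of "concat_prefix l y Q" "snd y (Q - d) (Q' - d)" p q] y2(1) pq
      concat_prefix_in_Mor[OF Q(1) nQ[unfolded d_def]] by simp
qed

lemma concat_path_apply:
  assumes pq: "p \<le> q" "q \<le> Q" and Q: "deg G l \<le> Q" "nle (Q - deg G l) (fst y)"
  shows "snd (concat_path l y) p q = factor (concat_prefix l y Q) p q"
proof -
  define d where "d = deg G l"
  have nQ: "nle Q (\<lambda>i. enat (d i) + fst y i)" using nle_add_left_iff[of d Q "fst y"] Q d_def by simp
  have nq: "nle q (\<lambda>i. enat (d i) + fst y i)" using le_nle_trans[OF pq(2) nQ] .
  have "nle (sup q d - d) (fst y)"
    using nle_add_left_iff[of d "sup q d" "fst y"] nle_sup[OF nq nle_add_left] by simp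
  then have "factor (concat_prefix l y Q) p q = factor (concat_prefix l y (sup q d)) p q"
    using factor_concat_prefix_mono[of "sup q d" Q p q] pq Q d_def by simp
  then show ?thesis unfolding concat_path_def d_def using pq nq d_def by simp
qed

lemma concat_path_nle_sup:
  assumes "nle q (fst (concat_path l y))"
  shows "nle (sup q (deg G l) - deg G l) (fst y)"
proof -
  have "nle (deg G l) (fst (concat_path l y))" unfolding fst_concat_path by (rule nle_add_left)
  then have "nle (sup q (deg G l)) (fst (concat_path l y))" using nle_sup[OF assms] by blast
  then show ?thesis using nle_add_left_iff[of "deg G l" "sup q (deg G l)" "fst y"]
    by (simp add: fst_concat_path)
qed

lemma graph_morphism_concat_path: "graph_morphism G (concat_path l y)"
  unfolding graph_morphism_def
proof (intro conjI allI impI)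
  fix p q assume "\<not> (p \<le> q \<and> nle q (fst (concat_path l y)))"
  then show "snd (concat_path l y) p q = undefined" by (auto simp: concat_path_def)
next
  fix p q assume pq: "p \<le> q \<and> nle q (fst (concat_path l y))"
  define Q where "Q = sup q (deg G l)"
  have Q: "deg G l \<le> Q" "q \<le> Q" "p \<le> Q" "nle (Q - deg G l) (fst y)"
    using concat_path_nle_sup pq order_trans[of p q Q] by (auto simp: Q_def)
  note w = concat_prefix_in_Mor[OF Q(1,4)]
  show "snd (concat_path l y) p q \<in> Mor G" "deg G (snd (concat_path l y) p q) = q - p"
    "rng G (snd (concat_path l y) p q) = snd (concat_path l y) p p"
    "src G (snd (concat_path l y) p q) = snd (concat_path l y) q q"
    using concat_path_apply[OF _ _ Q(1,4)] factor_in_Mor[OF w(1)] deg_factor[OF w(1)]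
      rng_factor[OF w(1)] src_factor[OF w(1)] pq Q w(2) by simp_all
next
  fix p assume p: "nle p (fst (concat_path l y))"
  define Q where "Q = sup p (deg G l)"
  have Q: "deg G l \<le> Q" "p \<le> Q" "nle (Q - deg G l) (fst y)"
    using concat_path_nle_sup p by (auto simp: Q_def)
  note w = concat_prefix_in_Mor[OF Q(1,3)]
  show "snd (concat_path l y) p p \<in> verts G"
    using concat_path_apply[OF order_refl Q(2) Q(1,3)] factor_in_Mor[OF w(1)] deg_factor[OF w(1)] Q w(2)
    by (simp add: verts_iff)
next
  fix p q r assume pqr: "p \<le> q \<and> q \<le> r \<and> nle r (fst (concat_path l y))"
  define Q where "Q = sup r (deg G l)"
  have Q: "deg G l \<le> Q" "r \<le> Q" "q \<le> Q" "nle (Q - deg G l) (fst y)"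
    using concat_path_nle_sup pqr order_trans[of q r Q] by (auto simp: Q_def)
  note w = concat_prefix_in_Mor[OF Q(1,4)]
  have "p \<le> r" using pqr by (metis order_trans)
  then show "cmp G (snd (concat_path l y) p q) (snd (concat_path l y) q r) = snd (concat_path l y) p r"
    using concat_path_apply[OF _ _ Q(1,4)] factor_cmp_factor(2)[OF w(1), of p q r] pqr Q w(2) by simp
qed

lemma concat_path_initial: "snd (concat_path l y) 0 (deg G l) = l"
proof -
  have "concat_prefix l y (deg G l) = l"
    using y(2) l by (simp add: concat_prefix_def)
  then show ?thesis
    using concat_path_apply[OF zero_le_deg order_refl order_refl] factor_whole[OF l] by simp
qed

lemma shift_concat_path: "shift (deg G l) (concat_path l y) = y"
proof -
  define d where "d = deg G l"
  have "snd (concat_path l y) (a + d) (b + d) = snd y a b" if ab: "a \<le> b" "nle b (fst y)" for a b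
  proof -
    note yb = graph_morphismD[OF y(1) zero_le_deg ab(2)]
    have "snd (concat_path l y) (a + d) (b + d) = factor (cmp G l (snd y 0 b)) (d + a) (d + b)"
      using concat_path_apply[of "a + d" "b + d" "b + d"] ab
      by (simp add: add_right_mono d_def concat_prefix_def add.commute le_add_fun)
    also have "\<dots> = factor (snd y 0 b) a b"
      using factor_cmp_right[OF l yb(1)] yb y(2) ab d_def by simp
    also have "\<dots> = snd y a b"
      using factor_graph_morphism[OF y(1) ab(1) order_refl ab(2)] .
    finally show ?thesis .
  qed
  moreover have "(\<lambda>i. fst (concat_path l y) i - enat (d i)) = fst y"
    unfolding fst_concat_path d_def by (rule enat_add_diff_cancel_left)
  ultimately show ?thesis
    using graph_morphism_undefined[OF y(1)] unfolding shift_def d_def[symmetric]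
    by (intro prod_eqI) (auto simp: fun_eq_iff)
qed

lemma concat_path_unique:
  assumes z: "graph_morphism G z" "fst z = (\<lambda>i. enat (deg G l i) + fst y i)"
    "snd z 0 (deg G l) = l" "shift (deg G l) z = y"
  shows "z = concat_path l y"
proof (rule prod_eqI)
  show "fst z = fst (concat_path l y)" using z(2) fst_concat_path by simp
  show "snd z = snd (concat_path l y)"
  proof (intro ext)
    fix p q
    show "snd z p q = snd (concat_path l y) p q"
    proof (cases "p \<le> q \<and> nle q (fst z)")
      case False
      then show ?thesis
        using graph_morphism_undefined[OF z(1) False] z(2) by (auto simp: concat_path_def)
    next
      case True
      define d where "d = deg G l"
      define Q where "Q = sup q d"
      have Q: "d \<le> Q" "q \<le> Q" "nle (Q - d) (fst y)"
        using concat_path_nle_sup True z(2) by (auto simp: Q_def d_def fst_concat_path)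
      have nQ: "nle Q (fst z)"
        using nle_sup[of q "fst z" d] True nle_add_left[of d "fst y"] z(2) Q_def d_def by simp
      have "snd z p q = factor (snd z 0 Q) p q"
        using factor_graph_morphism[OF z(1)] True Q nQ by simp
      also have "snd z 0 Q = cmp G (snd z 0 d) (snd z d Q)"
        using graph_morphism_cmp[OF z(1) zero_le_deg Q(1) nQ] by simp
      also have "snd z d Q = snd y 0 (Q - d)"
        using z(2,4) Q shift_apply[of 0 "Q - d" d z]
        by (simp add: d_def fst_shift enat_add_diff_cancel_left le_add_diff_inverse2_fun)
      also have "cmp G (snd z 0 d) (snd y 0 (Q - d)) = concat_prefix l y Q"
        using z(3) by (simp add: concat_prefix_def d_def)
      finally show ?thesis using concat_path_apply[of p q Q] True Q d_def by simp
    qed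
  qed
qed

lemma concat_eq_concat_path: "concat G l y = concat_path l y"
  unfolding concat_def
  using graph_morphism_concat_path fst_concat_path concat_path_initial shift_concat_path concat_path_unique
  by (intro the_equality) blast+

lemma graph_morphism_concat: "graph_morphism G (concat G l y)"
  and fst_concat: "fst (concat G l y) = (\<lambda>i. enat (deg G l i) + fst y i)"
  and concat_initial: "snd (concat G l y) 0 (deg G l) = l"
  and shift_concat: "shift (deg G l) (concat G l y) = y"
  by (simp_all add: concat_eq_concat_path graph_morphism_concat_path fst_concat_path
      concat_path_initial shift_concat_path)

lemma concat_apply_shifted:
  assumes "a \<le> b" "nle b (fst y)"
  shows "snd (concat G l y) (deg G l + a) (deg G l + b) = snd y a b"
  using shift_apply[of a b "deg G l" "concat G l y"] shift_concat assms by (simp add: add.commute)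

lemma concat_apply_initial:
  assumes "nle Q (fst y)"
  shows "snd (concat G l y) 0 (deg G l + Q) = cmp G l (snd y 0 Q)"
proof -
  have "nle (deg G l + Q) (fst (concat G l y))" using nle_add_mono[OF assms] fst_concat by simp
  from graph_morphism_cmp[OF graph_morphism_concat zero_le_deg le_add_fun(1) this] show ?thesis
    using concat_initial concat_apply_shifted[OF zero_le_deg assms] by simp
qed

end

lemma boundary_path_concat:
  assumes l: "l \<in> Mor G" and y: "boundary_path G y" "snd y 0 0 = src G l"
  shows "boundary_path G (concat G l y)"
proof -
  note gy = boundary_path_graph_morphism[OF y(1)]
  obtain ny where ny: "nle ny (fst y)" "\<forall>p i. ny \<le> p \<and> nle p (fst y) \<and> enat (p i) = fst y i \<longrightarrow>
      \<not> (\<exists>l\<in>Mor G. rng G l = snd y p p \<and> deg G l = basis i)"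
    using y unfolding boundary_path_def by blast
  define z where "z = concat G l y"
  define d where "d = deg G l"
  note fz = fst_concat[OF l gy y(2), folded z_def d_def]
  have "\<not> (\<exists>l\<in>Mor G. rng G l = snd z p p \<and> deg G l = basis i)"
    if p: "d + ny \<le> p" "nle p (fst z)" "enat (p i) = fst z i" for p i
  proof -
    have dp: "d \<le> p" using order_trans[OF le_add_fun(1) p(1)] .
    have "ny \<le> p - d" "nle (p - d) (fst y)" "enat ((p - d) i) = fst y i"
      using add_le_imp_le_diff_fun p nle_add_left_iff[OF dp] fz le_funD[OF dp, of i]
      by (auto simp: enat_add_diff_cancel_left dest: arg_cong[where f="\<lambda>e. e - enat (d i)"])
    moreover have "snd z p p = snd y (p - d) (p - d)"
      using concat_apply_shifted[OF l gy y(2) order_refl] calculation(2)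
        le_add_diff_inverse_fun[OF dp] z_def d_def by metis
    ultimately show ?thesis using ny(2)[rule_format, of "p - d" i] by auto
  qed
  moreover have "nle (d + ny) (fst z)" using nle_add_mono[OF ny(1)] fz by simp
  ultimately show ?thesis
    unfolding boundary_path_def z_def[symmetric] using graph_morphism_concat[OF l gy y(2)] z_def by blast
qed

lemma concat_shift_segment:
  assumes x: "graph_morphism G x" "nle n (fst x)" and y: "graph_morphism G y" "nle q (fst y)"
    and mnpq: "m \<le> n" "p \<le> q" and xy: "snd x n n = snd y p p"
  shows "snd (concat G (snd x 0 n) (shift p y)) m (n + (q - p)) = cmp G (snd x m n) (snd y p q)"
proof -
  define z where "z = concat G (snd x 0 n) (shift p y)"
  have p: "nle p (fst y)" using le_nle_trans[OF mnpq(2) y(2)] .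
  note w = graph_morphismD[OF x(1) zero_le_deg x(2)]
  have y': "graph_morphism G (shift p y)" "snd (shift p y) 0 0 = src G (snd x 0 n)"
    using graph_morphism_shift[OF y(1) p] shift_apply[of 0 0 p y] xy w by simp_all
  note gz = graph_morphism_concat[OF w(1) y', folded z_def]
  have nq: "nle (q - p) (fst (shift p y))"
    using nle_shifted_iff[OF p] y(2) le_add_diff_inverse2_fun[OF mnpq(2)] by (simp add: fst_shift)
  have "nle (n + (q - p)) (fst z)"
    using nle_add_mono[OF nq] fst_concat[OF w(1) y'] w(2) z_def by simp
  then have "snd z m (n + (q - p)) = cmp G (snd z m n) (snd z n (n + (q - p)))"
    using graph_morphism_cmp[OF gz mnpq(1) le_add_fun(1)] by simp
  also have "snd z m n = snd x m n"
    using factor_graph_morphism[OF gz mnpq(1) order_refl] le_nle_trans[OF le_add_fun(1) \<open>nle _ (fst z)\<close>]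
      concat_initial[OF w(1) y', folded z_def] factor_graph_morphism[OF x(1) mnpq(1) order_refl x(2)] w(2)
    by simp
  also have "snd z n (n + (q - p)) = snd y p q"
    using concat_apply_shifted[OF w(1) y' zero_le_deg nq] shift_apply[of 0 "q - p" p y] nq
      le_add_diff_inverse2_fun[OF mnpq(2)] w(2) z_def by simp
  finally show ?thesis unfolding z_def .
qed

lemma boundary_path_no_exit:
  assumes "boundary_path G x"
  obtains nx where "nle nx (fst x)"
    "\<And>p i b. nx \<le> p \<Longrightarrow> nle p (fst x) \<Longrightarrow> enat (p i) = fst x i \<Longrightarrow> b \<in> Mor G \<Longrightarrow>
      rng G b = snd x p p \<Longrightarrow> \<not> basis i \<le> deg G b"
proof -
  obtain nx where nx: "nle nx (fst x)" "\<forall>p i. nx \<le> p \<and> nle p (fst x) \<and> enat (p i) = fst x i \<longrightarrow>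
      \<not> (\<exists>e\<in>Mor G. rng G e = snd x p p \<and> deg G e = basis i)"
    using assms unfolding boundary_path_def by blast
  have "\<not> basis i \<le> deg G b"
    if p: "nx \<le> p" "nle p (fst x)" "enat (p i) = fst x i" "b \<in> Mor G" "rng G b = snd x p p" for p i b
  proof
    assume "basis i \<le> deg G b"
    then obtain e r where er: "e \<in> Mor G" "r \<in> Mor G" "src G e = rng G r" "deg G e = basis i"
        "cmp G e r = b"
      using factorisation_exists[OF p(4) le_add_diff_inverse_fun[symmetric]] by metis
    then have "rng G e = snd x p p" using rng_cmp[OF er(1-3)] p(5) by simp
    then show False using nx(2) p(1-3) er(1,4) by blast
  qed
  then show ?thesis using that nx(1) by blast
qed

text \<open>Far enough along a boundary path \<open>x\<close> there are no edges of degree \<open>e\<^sub>i\<close> in the directions \<open>i\<close> in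
  which \<open>x\<close> has stopped; so a minimal common extension of \<open>l \<in> E\<close> with a long initial segment
  \<open>x(0, m)\<close> cannot leave \<open>x\<close>, and \<open>l\<close> must be an initial segment of \<open>x\<close>.\<close>

lemma boundary_path_meets_exhaustive:
  assumes x: "boundary_path G x" and E: "finite E" "exhaustive G v E" and v: "snd x 0 0 = v"
  obtains l where "l \<in> E" "nle (deg G l) (fst x)" "snd x 0 (deg G l) = l"
proof -
  note gx = boundary_path_graph_morphism[OF x]
  obtain nx where nx: "nle nx (fst x)"
    "\<And>p i b. nx \<le> p \<Longrightarrow> nle p (fst x) \<Longrightarrow> enat (p i) = fst x i \<Longrightarrow> b \<in> Mor G \<Longrightarrow>
      rng G b = snd x p p \<Longrightarrow> \<not> basis i \<le> deg G b"
    using boundary_path_no_exit[OF x] by blast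
  define K where "K = (\<lambda>i. nx i + (\<Sum>l\<in>E. deg G l i))"
  have K: "nx \<le> K" "deg G l \<le> K" if "l \<in> E" for l
    using member_le_sum[OF that _ E(1), of "\<lambda>l. deg G l _"]
    by (auto simp: K_def le_fun_def trans_le_add2)
  define m where "m = nmin K (fst x)"
  have nm: "nle m (fst x)" using nmin_nle m_def by simp
  define mu where "mu = snd x 0 m"
  note mu = graph_morphismD[OF gx zero_le_deg nm, folded mu_def]
  have "mu \<in> vMor G v" using mu v by (simp add: vMor_def)
  then obtain l a b where l: "l \<in> E" "(a, b) \<in> MCE G l mu"
    using E(2) unfolding exhaustive_def by fastforce
  have lM: "l \<in> Mor G" using E(2) l(1) unfolding exhaustive_def vMor_def by auto
  have b: "b \<in> Mor G" "rng G b = snd x m m" "m + deg G b = sup (deg G l) m"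
    using l(2) deg_cmp[OF mu(1), of b] mu(2,4) unfolding MCE_def by auto
  have dl: "deg G l \<le> m"
  proof (rule ccontr)
    assume "\<not> deg G l \<le> m"
    then obtain i where i: "m i < deg G l i" by (auto simp: le_fun_def not_le)
    have "nx \<le> m" using le_nmin[OF K(1)[OF l(1)] nx(1)] m_def by simp
    moreover have "enat (m i) = fst x i"
      using i le_funD[OF K(2)[OF l(1)], of i] unfolding m_def nmin_apply by (cases "fst x i") auto
    moreover have "deg G b = sup (deg G l) m - m" using b(3) by (metis add_diff_cancel_left')
    then have "basis i \<le> deg G b"
      using basis_le_diff[of m i "sup (deg G l) m"] i by (simp add: sup_max)
    ultimately show False using nx(2) nm b(1,2) by blast
  qed
  have "l = factor mu 0 (deg G l)"
    using initial_factor_if_MCE[OF l(2) lM mu(1)] dl mu(2) by simp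
  also have "\<dots> = snd x 0 (deg G l)"
    using factor_graph_morphism[OF gx zero_le_deg dl nm] mu_def by simp
  finally show ?thesis using that l(1) le_nle_trans[OF dl nm] by simp
qed


end

section \<open>The extension\<close>

text \<open>A class \<open>[x; (m, n)]\<close> is determined by the part \<open>x(m \<and> d(x), n \<and> d(x))\<close> of \<open>x\<close> it sees,
  by how far \<open>m\<close> overshoots \<open>d(x)\<close>, and by its degree.\<close>

fun pvisible :: "('m, 'k) ptriple \<Rightarrow> 'm" where
  "pvisible (x, m, n) = snd x (nmin m (fst x)) (nmin n (fst x))"

fun povershoot :: "('m, 'k) ptriple \<Rightarrow> 'k \<Rightarrow> nat" where
  "povershoot (x, m, n) = m - nmin m (fst x)"

fun pdeg :: "('m, 'k) ptriple \<Rightarrow> 'k \<Rightarrow> nat" where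
  "pdeg (x, m, n) = n - m"

lemma Pset_iff: "(x, m, n) \<in> Pset G \<longleftrightarrow> boundary_path G x \<and> m \<le> n \<and> \<not> nle n (fst x)"
  by (simp add: Pset_def)

lemma prel_iff_invariants:
  "prel G a b \<longleftrightarrow> a \<in> Pset G \<and> b \<in> Pset G \<and>
     pvisible a = pvisible b \<and> povershoot a = povershoot b \<and> pdeg a = pdeg b"
  by (cases a; cases b) (simp add: prel_def)

lemma pclass_eq_iff:
  assumes "a \<in> Pset G" "b \<in> Pset G"
  shows "pclass G a = pclass G b \<longleftrightarrow>
    pvisible a = pvisible b \<and> povershoot a = povershoot b \<and> pdeg a = pdeg b"
proof
  assume "pclass G a = pclass G b"
  then have "b \<in> pclass G a" using assms(2) by (simp add: pclass_def prel_iff_invariants)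
  then show "pvisible a = pvisible b \<and> povershoot a = povershoot b \<and> pdeg a = pdeg b"
    by (simp add: pclass_def prel_iff_invariants)
qed (use assms in \<open>auto simp: pclass_def prel_iff_invariants\<close>)

lemma rep_pclass:
  assumes a: "a \<in> Pset G" and b: "rep (pclass G a) = b"
  shows "b \<in> Pset G" "pclass G b = pclass G a"
    "pvisible b = pvisible a" "povershoot b = povershoot a" "pdeg b = pdeg a"
proof -
  have "a \<in> pclass G a" using a by (simp add: pclass_def prel_iff_invariants)
  then have "b \<in> pclass G a" unfolding b[symmetric] rep_def by (rule someI)
  then show "b \<in> Pset G" "pvisible b = pvisible a" "povershoot b = povershoot a" "pdeg b = pdeg a"
    by (simp_all add: pclass_def prel_iff_invariants)
  then show "pclass G b = pclass G a" using pclass_eq_iff[OF _ a] by simp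
qed

lemma Ptil_rep:
  assumes "X \<in> Ptil G" "rep X = b"
  shows "b \<in> Pset G" "pclass G b = X"
proof -
  obtain a where "a \<in> Pset G" "X = pclass G a" using assms(1) by (auto simp: Ptil_def)
  then show "b \<in> Pset G" "pclass G b = X" using rep_pclass(1,2) assms(2) by simp_all
qed

lemma Mor_ext: "Mor (ext G) = Inl ` Mor G \<union> Inr ` Ptil G"
  and ext_Inl [simp]: "rng (ext G) (Inl l) = Inl (rng G l)" "src (ext G) (Inl l) = Inl (src G l)"
    "deg (ext G) (Inl l) = deg G l" "cmp (ext G) (Inl l) (Inl l') = Inl (cmp G l l')"
  by (simp_all add: ext_def)

lemma ext_Inr:
  assumes "rep X = (x, m, n)"
  shows "rng (ext G) (Inr X) = (if nle m (fst x) then Inl (snd x m m) else Inr (pclass G (x, m, m)))"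
    "src (ext G) (Inr X) = Inr (pclass G (x, n, n))" "deg (ext G) (Inr X) = n - m"
  using assms by (simp_all add: ext_def)

lemma deg_ext_pclass:
  assumes "a \<in> Pset G"
  shows "deg (ext G) (Inr (pclass G a)) = pdeg a"
proof -
  obtain x m n where r: "rep (pclass G a) = (x, m, n)" by (cases "rep (pclass G a)")
  then show ?thesis using ext_Inr(3)[OF r] rep_pclass(5)[OF assms r] by simp
qed

context k_graph
begin

definition path_cmp_triple :: "'m \<Rightarrow> ('m, 'k) ptriple \<Rightarrow> ('m, 'k) ptriple" where
  "path_cmp_triple l a = (case a of (x, m, n) \<Rightarrow> (concat G l (shift m x), 0, deg G l + n - m))"

definition triple_cmp_triple :: "('m, 'k) ptriple \<Rightarrow> ('m, 'k) ptriple \<Rightarrow> ('m, 'k) ptriple" where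
  "triple_cmp_triple a b = (case a of (x, m, n) \<Rightarrow> case b of (y, p, q) \<Rightarrow>
     (concat G (snd x 0 (nmin n (fst x))) (shift (nmin p (fst y)) y), m, n + q - p))"

lemma cmp_ext_Inl_Inr: "cmp (ext G) (Inl l) (Inr X) = Inr (pclass G (path_cmp_triple l (rep X)))"
  by (simp add: ext_def path_cmp_triple_def split: prod.split)

lemma cmp_ext_Inr_Inr: "cmp (ext G) (Inr X) (Inr Y) = Inr (pclass G (triple_cmp_triple (rep X) (rep Y)))"
  by (simp add: ext_def triple_cmp_triple_def split: prod.split)

lemma
  assumes "(x, m, n) \<in> Pset G"
  shows pvisible_in_Mor: "pvisible (x, m, n) \<in> Mor G"
    and deg_pvisible: "deg G (pvisible (x, m, n)) = nmin n (fst x) - nmin m (fst x)"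
    and rng_pvisible: "rng G (pvisible (x, m, n)) = snd x (nmin m (fst x)) (nmin m (fst x))"
    and src_pvisible: "src G (pvisible (x, m, n)) = snd x (nmin n (fst x)) (nmin n (fst x))"
  using graph_morphismD[OF _ nmin_mono nmin_nle] assms
  by (simp_all add: Pset_iff boundary_path_graph_morphism)

lemma deg_pvisible_less:
  assumes "a \<in> Pset G"
  shows "\<not> povershoot a + pdeg a \<le> deg G (pvisible a)"
proof
  obtain x m n where a: "a = (x, m, n)" by (cases a)
  have mn: "m \<le> n" "\<not> nle n (fst x)" using assms a by (simp_all add: Pset_iff)
  assume le: "povershoot a + pdeg a \<le> deg G (pvisible a)"
  have "n \<le> nmin n (fst x)"
  proof (rule le_funI)
    fix i
    have "nmin m (fst x) i \<le> nmin n (fst x) i" "nmin m (fst x) i \<le> m i" "nmin n (fst x) i \<le> n i"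
      "m i \<le> n i"
      using le_funD[OF nmin_mono[OF mn(1)], of "fst x" i] le_funD[OF nmin_le[of m "fst x"], of i]
        le_funD[OF nmin_le[of n "fst x"], of i] le_funD[OF mn(1), of i] by simp_all
    moreover have "m i - nmin m (fst x) i + (n i - m i) \<le> nmin n (fst x) i - nmin m (fst x) i"
      using le_funD[OF le, of i] deg_pvisible assms a by simp
    ultimately show "n i \<le> nmin n (fst x) i" by linarith
  qed
  then show False using mn(2) nle_iff_le_nmin by blast
qed

lemma rng_ext_pclass:
  assumes a: "(x, m, n) \<in> Pset G"
  shows "rng (ext G) (Inr (pclass G (x, m, n))) =
    (if nle m (fst x) then Inl (snd x m m) else Inr (pclass G (x, m, m)))"
proof -
  obtain y p q where r: "rep (pclass G (x, m, n)) = (y, p, q)" by (cases "rep (pclass G (x, m, n))")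
  note b = rep_pclass(1)[OF a r] and inv = rep_pclass(3,4)[OF a r]
  have "nle p (fst y) \<longleftrightarrow> nle m (fst x)" using inv(2) by (simp add: diff_nmin_eq_0_iff[symmetric])
  moreover have "snd y (nmin p (fst y)) (nmin p (fst y)) = snd x (nmin m (fst x)) (nmin m (fst x))"
    using rng_pvisible[OF a] rng_pvisible[OF b] inv(1) by simp
  moreover have "pclass G (y, p, p) = pclass G (x, m, m)" if "\<not> nle m (fst x)"
    using that calculation a b inv(2) by (subst pclass_eq_iff) (simp_all add: Pset_iff)
  ultimately show ?thesis using ext_Inr(1)[OF r] by auto
qed

lemma src_ext_pclass:
  assumes a: "(x, m, n) \<in> Pset G"
  shows "src (ext G) (Inr (pclass G (x, m, n))) = Inr (pclass G (x, n, n))"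
proof -
  obtain y p q where r: "rep (pclass G (x, m, n)) = (y, p, q)" by (cases "rep (pclass G (x, m, n))")
  note b = rep_pclass(1)[OF a r] and inv = rep_pclass(3-5)[OF a r]
  have "n - nmin n (fst x) = q - nmin q (fst y)"
    using diff_nmin_eq[of m n "fst x"] diff_nmin_eq[of p q "fst y"] deg_pvisible[OF a] deg_pvisible[OF b]
      inv a b by (simp add: Pset_iff)
  then have "pclass G (y, q, q) = pclass G (x, n, n)"
    using src_pvisible[OF a] src_pvisible[OF b] inv(1) a b
    by (subst pclass_eq_iff) (simp_all add: Pset_iff)
  then show ?thesis using ext_Inr(2)[OF r] by simp
qed

lemma path_cmp_triple_invariants:
  assumes l: "l \<in> Mor G" and a: "(x, m, n) \<in> Pset G" and m: "nle m (fst x)" "snd x m m = src G l"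
  shows "path_cmp_triple l (x, m, n) \<in> Pset G"
    and "pvisible (path_cmp_triple l (x, m, n)) = cmp G l (pvisible (x, m, n))"
    and "povershoot (path_cmp_triple l (x, m, n)) = 0"
    and "pdeg (path_cmp_triple l (x, m, n)) = deg G l + pdeg (x, m, n)"
proof -
  have x: "boundary_path G x" "m \<le> n" "\<not> nle n (fst x)" using a by (simp_all add: Pset_iff)
  define y where "y = shift m x"
  have y: "boundary_path G y" "snd y 0 0 = src G l" "fst y = (\<lambda>i. fst x i - enat (m i))"
    using boundary_path_shift[OF x(1) m(1)] shift_apply[of 0 0 m x] m(2) by (simp_all add: y_def fst_shift)
  note gy = boundary_path_graph_morphism[OF y(1)]
  define z where "z = concat G l y"
  define n' where "n' = nmin n (fst x)"
  have mn': "m \<le> n'" using le_nmin[OF x(2) m(1)] n'_def by simp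
  have fz: "fst z = (\<lambda>i. enat (deg G l i) + (fst x i - enat (m i)))"
    using fst_concat[OF l gy y(2)] y(3) z_def by simp
  then show "path_cmp_triple l (x, m, n) \<in> Pset G"
    using boundary_path_concat[OF l y(1,2)] not_nle_concat_shift_left[OF x(2) m(1) x(3)]
    by (simp add: path_cmp_triple_def Pset_iff z_def[symmetric] y_def[symmetric])
  have nz: "nmin (deg G l + n - m) (fst z) = deg G l + (n' - m)"
    using nmin_concat_shift_left[OF x(2) m(1)] fz n'_def by simp
  have "nle (n' - m) (fst y)"
    using nle_shifted_iff[OF m(1)] nmin_nle le_add_diff_inverse2_fun[OF mn'(1)] y(3) n'_def by simp
  then have "snd z 0 (deg G l + (n' - m)) = cmp G l (snd x m n')"
    using concat_apply_initial[OF l gy y(2)] shift_apply[of 0 "n' - m" m x] z_def y_def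
      le_add_diff_inverse2_fun[OF mn'(1)] by simp
  then show "pvisible (path_cmp_triple l (x, m, n)) = cmp G l (pvisible (x, m, n))"
    using nz m(1) by (simp add: path_cmp_triple_def z_def[symmetric] y_def[symmetric] n'_def)
  show "povershoot (path_cmp_triple l (x, m, n)) = 0"
    by (simp add: path_cmp_triple_def)
  show "pdeg (path_cmp_triple l (x, m, n)) = deg G l + pdeg (x, m, n)"
    using x(2) by (auto simp: path_cmp_triple_def fun_eq_iff le_fun_def)
qed

lemma triple_cmp_triple_invariants:
  assumes a: "(x, m, n) \<in> Pset G" and b: "(y, p, q) \<in> Pset G"
    and xy: "snd x (nmin n (fst x)) (nmin n (fst x)) = snd y (nmin p (fst y)) (nmin p (fst y))"
    and overshoot: "n - nmin n (fst x) = p - nmin p (fst y)"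
  shows "triple_cmp_triple (x, m, n) (y, p, q) \<in> Pset G"
    and "pvisible (triple_cmp_triple (x, m, n) (y, p, q)) = cmp G (pvisible (x, m, n)) (pvisible (y, p, q))"
    and "povershoot (triple_cmp_triple (x, m, n) (y, p, q)) = povershoot (x, m, n)"
    and "pdeg (triple_cmp_triple (x, m, n) (y, p, q)) = pdeg (x, m, n) + pdeg (y, p, q)"
proof -
  have x: "boundary_path G x" "m \<le> n" "\<not> nle n (fst x)"
    and y: "boundary_path G y" "p \<le> q" "\<not> nle q (fst y)"
    using a b by (simp_all add: Pset_iff)
  note gx = boundary_path_graph_morphism[OF x(1)] and gy = boundary_path_graph_morphism[OF y(1)]
  define m' where "m' = nmin m (fst x)"
  define n' where "n' = nmin n (fst x)"
  define p' where "p' = nmin p (fst y)"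
  define q' where "q' = nmin q (fst y)"
  define w where "w = snd x 0 n'"
  have w: "w \<in> Mor G" "deg G w = n'" "src G w = snd x n' n'"
    using graph_morphismD[OF gx zero_le_deg nmin_nle, of n] by (simp_all add: w_def n'_def)
  have y': "boundary_path G (shift p' y)" "snd (shift p' y) 0 0 = src G w"
    using boundary_path_shift[OF y(1) nmin_nle] shift_apply[of 0 0 p' y] xy w p'_def n'_def by simp_all
  define z where "z = concat G w (shift p' y)"
  have fz: "fst z = (\<lambda>i. enat (n' i) + (fst y i - enat (p' i)))"
    using fst_concat[OF w(1) boundary_path_graph_morphism[OF y'(1)] y'(2)] w(2)
    by (simp add: z_def fst_shift)
  have nz: "nmin m (fst z) = m'" "nmin (n + q - p) (fst z) = n' + (q' - p')"
    using nmin_concat_shift[OF x(2) y(2) overshoot] fz by (simp_all add: m'_def n'_def p'_def q'_def)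
  have "m \<le> n + q - p"
  proof (rule le_funI)
    show "m i \<le> (n + q - p) i" for i using le_funD[OF x(2), of i] le_funD[OF y(2), of i] by simp
  qed
  then show "triple_cmp_triple (x, m, n) (y, p, q) \<in> Pset G"
    using boundary_path_concat[OF w(1) y'] not_nle_concat_shift[OF y(2) overshoot y(3)] fz
    by (simp add: triple_cmp_triple_def Pset_iff z_def[symmetric] w_def[symmetric] n'_def[symmetric]
        p'_def[symmetric])
  have "m' \<le> n'" "p' \<le> q'"
    using nmin_mono[OF x(2)] nmin_mono[OF y(2)] by (simp_all add: m'_def n'_def p'_def q'_def)
  then have "snd z m' (n' + (q' - p')) = cmp G (snd x m' n') (snd y p' q')"
    using concat_shift_segment[OF gx nmin_nle gy nmin_nle _ _ xy]
    by (simp add: z_def w_def n'_def p'_def q'_def)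
  then show "pvisible (triple_cmp_triple (x, m, n) (y, p, q)) = cmp G (pvisible (x, m, n)) (pvisible (y, p, q))"
    using nz by (simp add: triple_cmp_triple_def z_def[symmetric] w_def[symmetric] n'_def[symmetric]
        p'_def[symmetric] m'_def q'_def)
  show "povershoot (triple_cmp_triple (x, m, n) (y, p, q)) = povershoot (x, m, n)"
    using nz by (simp add: triple_cmp_triple_def z_def[symmetric] w_def[symmetric] n'_def[symmetric]
        p'_def[symmetric] m'_def)
  show "pdeg (triple_cmp_triple (x, m, n) (y, p, q)) = pdeg (x, m, n) + pdeg (y, p, q)"
    using x(2) y(2) by (auto simp: triple_cmp_triple_def fun_eq_iff le_fun_def)
qed

lemma cmp_ext_Inl_pclass:
  assumes l: "l \<in> Mor G" and a: "a \<in> Pset G" and c: "c \<in> Pset G"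
    and composable: "src (ext G) (Inl l) = rng (ext G) (Inr (pclass G a))"
    and "pvisible c = cmp G l (pvisible a)" "povershoot c = 0" "pdeg c = deg G l + pdeg a"
  shows "cmp (ext G) (Inl l) (Inr (pclass G a)) = Inr (pclass G c)"
proof -
  obtain x m n where r: "rep (pclass G a) = (x, m, n)" by (cases "rep (pclass G a)")
  note a' = rep_pclass[OF a r]
  have "nle m (fst x)" "snd x m m = src G l"
    using composable rng_ext_pclass[OF a'(1)] a'(2) by (auto split: if_splits)
  note lp = path_cmp_triple_invariants[OF l a'(1) this]
  have "pclass G (path_cmp_triple l (x, m, n)) = pclass G c"
    using pclass_eq_iff[OF lp(1) c] lp a' assms by simp
  then show ?thesis using cmp_ext_Inl_Inr r by simp
qed

lemma cmp_ext_pclass_pclass: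
  assumes a: "a \<in> Pset G" and b: "b \<in> Pset G" and c: "c \<in> Pset G"
    and composable: "src (ext G) (Inr (pclass G a)) = rng (ext G) (Inr (pclass G b))"
    and "pvisible c = cmp G (pvisible a) (pvisible b)" "povershoot c = povershoot a"
    "pdeg c = pdeg a + pdeg b"
  shows "cmp (ext G) (Inr (pclass G a)) (Inr (pclass G b)) = Inr (pclass G c)"
proof -
  obtain x m n where r: "rep (pclass G a) = (x, m, n)" by (cases "rep (pclass G a)")
  obtain y p q where s: "rep (pclass G b) = (y, p, q)" by (cases "rep (pclass G b)")
  note a' = rep_pclass[OF a r] and b' = rep_pclass[OF b s]
  have "\<not> nle p (fst y)" "pclass G (x, n, n) = pclass G (y, p, p)"
    using composable src_ext_pclass[OF a'(1)] rng_ext_pclass[OF b'(1)] a'(2) b'(2)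
    by (auto split: if_splits)
  moreover have "(x, n, n) \<in> Pset G" "(y, p, p) \<in> Pset G"
    using a'(1) b'(1) calculation(1) by (simp_all add: Pset_iff)
  ultimately have "snd x (nmin n (fst x)) (nmin n (fst x)) = snd y (nmin p (fst y)) (nmin p (fst y))"
      "n - nmin n (fst x) = p - nmin p (fst y)"
    using pclass_eq_iff[where a="(x, n, n)" and b="(y, p, p)"] by simp_all
  note ip = triple_cmp_triple_invariants[OF a'(1) b'(1) this]
  have "pclass G (triple_cmp_triple (x, m, n) (y, p, q)) = pclass G c"
    using pclass_eq_iff[OF ip(1) c] ip a' b' assms by simp
  then show ?thesis using cmp_ext_Inr_Inr r s by simp
qed

lemma cmp_ext_Inl_segment:
  assumes a: "(x, A, N) \<in> Pset G" and "m \<le> A" "nle A (fst x)"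
  shows "cmp (ext G) (Inl (snd x m A)) (Inr (pclass G (x, A, N))) = Inr (pclass G (x, m, N))"
proof -
  have x: "graph_morphism G x" "A \<le> N" using a by (simp_all add: Pset_iff boundary_path_graph_morphism)
  have nm: "nle m (fst x)" using le_nle_trans assms by blast
  have AN: "A \<le> nmin N (fst x)" using le_nmin[OF x(2) assms(3)] .
  note l = graph_morphismD[OF x(1) assms(2,3)]
  show ?thesis
  proof (rule cmp_ext_Inl_pclass[OF l(1) a])
    show "(x, m, N) \<in> Pset G" using a assms(2) by (auto simp: Pset_iff intro: order_trans)
    show "src (ext G) (Inl (snd x m A)) = rng (ext G) (Inr (pclass G (x, A, N)))"
      using rng_ext_pclass[OF a] l assms(3) by simp
    show "pvisible (x, m, N) = cmp G (snd x m A) (pvisible (x, A, N))"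
      using graph_morphism_cmp[OF x(1) assms(2) AN nmin_nle] nm assms(3) by simp
    show "povershoot (x, m, N) = 0" using nm by simp
    show "pdeg (x, m, N) = deg G (snd x m A) + pdeg (x, A, N)"
      using l(2) diff_add_diff_fun[OF assms(2) x(2)] by simp
  qed
qed

lemma cmp_ext_segment_segment:
  assumes a: "(x, m, n) \<in> Pset G" and "n \<le> N"
  shows "cmp (ext G) (Inr (pclass G (x, m, n))) (Inr (pclass G (x, n, N))) = Inr (pclass G (x, m, N))"
proof -
  have x: "boundary_path G x" "m \<le> n" "\<not> nle n (fst x)" using a by (simp_all add: Pset_iff)
  have N: "\<not> nle N (fst x)" using x(3) assms(2) le_nle_trans by blast
  have b: "(x, n, N) \<in> Pset G" and c: "(x, m, N) \<in> Pset G"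
    using x N assms(2) order_trans by (auto simp: Pset_iff)
  show ?thesis
  proof (rule cmp_ext_pclass_pclass[OF a b c])
    show "src (ext G) (Inr (pclass G (x, m, n))) = rng (ext G) (Inr (pclass G (x, n, N)))"
      using src_ext_pclass[OF a] rng_ext_pclass[OF b] x(3) by simp
    show "pvisible (x, m, N) = cmp G (pvisible (x, m, n)) (pvisible (x, n, N))"
      using graph_morphism_cmp[OF boundary_path_graph_morphism[OF x(1)] nmin_mono nmin_mono nmin_nle]
        x(2) assms(2) by simp
    show "pdeg (x, m, N) = pdeg (x, m, n) + pdeg (x, n, N)"
      using diff_add_diff_fun[OF x(2) assms(2)] by simp
  qed simp
qed

text \<open>A common extension of \<open>l\<close> and \<open>u\<close> through a class \<open>[z; (0, N)]\<close> sees both \<open>l\<close> and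
  \<open>u\<close> inside \<open>z\<close>, so \<open>N = d(l) \<or> d(u)\<close> would force \<open>N \<le> d(z)\<close>.\<close>

lemma cmp_ext_Inl_Inr_not_minimal:
  assumes l: "l \<in> Mor G" "X \<in> Ptil G" "src (ext G) (Inl l) = rng (ext G) (Inr X)"
    and u: "u \<in> Mor G" "Y \<in> Ptil G" "src (ext G) (Inl u) = rng (ext G) (Inr Y)"
    and eq: "cmp (ext G) (Inl l) (Inr X) = cmp (ext G) (Inl u) (Inr Y)"
  shows "deg (ext G) (cmp (ext G) (Inl l) (Inr X)) \<noteq> sup (deg G l) (deg G u)"
proof -
  have product: "\<exists>c. c \<in> Pset G \<and> cmp (ext G) (Inl k) (Inr Z) = Inr (pclass G c) \<and>
      povershoot c = 0 \<and> deg G k \<le> deg G (pvisible c)"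
    if k: "k \<in> Mor G" "Z \<in> Ptil G" "src (ext G) (Inl k) = rng (ext G) (Inr Z)" for k Z
  proof -
    obtain x m n where r: "rep Z = (x, m, n)" by (cases "rep Z")
    note a = Ptil_rep[OF k(2) r]
    have "nle m (fst x)" "snd x m m = src G k"
      using k(3) rng_ext_pclass[OF a(1)] a(2) by (auto split: if_splits)
    note lp = path_cmp_triple_invariants[OF k(1) a(1) this]
    have "src G k = rng G (pvisible (x, m, n))"
      using rng_pvisible[OF a(1)] \<open>nle m (fst x)\<close> \<open>snd x m m = src G k\<close> by simp
    then have "deg G k \<le> deg G (pvisible (path_cmp_triple k (x, m, n)))"
      using lp(2) k(1) pvisible_in_Mor[OF a(1)] by (simp add: le_add_fun)
    moreover have "cmp (ext G) (Inl k) (Inr Z) = Inr (pclass G (path_cmp_triple k (x, m, n)))"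
      using cmp_ext_Inl_Inr r by simp
    ultimately show ?thesis using lp by blast
  qed
  obtain c where c: "c \<in> Pset G" "cmp (ext G) (Inl l) (Inr X) = Inr (pclass G c)"
      "povershoot c = 0" "deg G l \<le> deg G (pvisible c)"
    using product[OF l] by blast
  obtain c' where c': "c' \<in> Pset G" "cmp (ext G) (Inl u) (Inr Y) = Inr (pclass G c')"
      "deg G u \<le> deg G (pvisible c')"
    using product[OF u] by blast
  have "pvisible c = pvisible c'" using pclass_eq_iff[OF c(1) c'(1)] c(2) c'(2) eq by simp
  then have "sup (deg G l) (deg G u) \<le> deg G (pvisible c)" using c(4) c'(3) by simp
  then show ?thesis using deg_pvisible_less[OF c(1)] deg_ext_pclass[OF c(1)] c(2,3) by auto
qed

lemma MCE_ext_Inl: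
  assumes "l \<in> Mor G" "u \<in> Mor G"
  shows "MCE (ext G) (Inl l) (Inl u) = map_prod Inl Inl ` MCE G l u"
proof (intro equalityI subsetI)
  fix ab assume ab: "ab \<in> MCE (ext G) (Inl l) (Inl u)"
  obtain \<alpha> \<beta> where ab_eq: "ab = (\<alpha>, \<beta>)" by (cases ab)
  have A: "\<alpha> \<in> Mor (ext G)" "\<beta> \<in> Mor (ext G)" "src (ext G) (Inl l) = rng (ext G) \<alpha>"
      "src (ext G) (Inl u) = rng (ext G) \<beta>" "cmp (ext G) (Inl l) \<alpha> = cmp (ext G) (Inl u) \<beta>"
      "deg (ext G) (cmp (ext G) (Inl l) \<alpha>) = sup (deg G l) (deg G u)"
    using ab ab_eq unfolding MCE_def by auto
  show "ab \<in> map_prod Inl Inl ` MCE G l u"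
  proof (cases \<alpha>; cases \<beta>)
    fix a b assume "\<alpha> = Inl a" "\<beta> = Inl b"
    then show ?thesis using A ab_eq by (auto simp: MCE_def Mor_ext)
  next
    fix X Y assume "\<alpha> = Inr X" "\<beta> = Inr Y"
    then show ?thesis using A cmp_ext_Inl_Inr_not_minimal assms by (auto simp: Mor_ext)
  qed (use A cmp_ext_Inl_Inr in simp_all)
qed (auto simp: MCE_def Mor_ext)

lemma MCE_ext_Inl_Inr_nonempty:
  assumes X: "X \<in> Ptil G" "rng (ext G) (Inr X) = Inl v" and E: "finite E" "exhaustive G v E"
  shows "\<exists>l\<in>E. MCE (ext G) (Inl l) (Inr X) \<noteq> {}"
proof -
  obtain x m n where r: "rep X = (x, m, n)" by (cases "rep X")
  note a = Ptil_rep(1)[OF X(1) r] and X_eq = Ptil_rep(2)[OF X(1) r, symmetric]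
  have x: "boundary_path G x" "m \<le> n" "\<not> nle n (fst x)" using a by (simp_all add: Pset_iff)
  have m: "nle m (fst x)" "snd x m m = v" using X(2) rng_ext_pclass[OF a] X_eq by (auto split: if_splits)
  obtain l where l: "l \<in> E" "nle (deg G l) (fst (shift m x))" "snd (shift m x) 0 (deg G l) = l"
    using boundary_path_meets_exhaustive[OF boundary_path_shift[OF x(1) m(1)] E]
      shift_apply[of 0 0 m x] m by auto
  define A where "A = deg G l + m"
  define N where "N = sup n A"
  have A: "m \<le> A" "nle A (fst x)" "snd x m A = l"
    using l(2,3) nle_shifted_iff[OF m(1)] shift_apply[of 0 "deg G l" m x]
    by (simp_all add: A_def fst_shift le_add_fun)
  have N: "n \<le> N" "A \<le> N" "\<not> nle N (fst x)"
    using x(3) le_nle_trans[of n N "fst x"] by (auto simp: N_def)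
  have \<alpha>: "(x, A, N) \<in> Pset G" and \<beta>: "(x, n, N) \<in> Pset G"
    using x(1) N by (simp_all add: Pset_iff)
  have "(Inr (pclass G (x, A, N)), Inr (pclass G (x, n, N))) \<in> MCE (ext G) (Inl l) (Inr X)"
    unfolding MCE_def
  proof (clarsimp simp: Mor_ext Ptil_def \<alpha> \<beta>, intro conjI)
    show "Inl (src G l) = rng (ext G) (Inr (pclass G (x, A, N)))"
      using rng_ext_pclass[OF \<alpha>] graph_morphismD(4)[OF boundary_path_graph_morphism[OF x(1)] A(1,2)] A
      by simp
    show "src (ext G) (Inr X) = rng (ext G) (Inr (pclass G (x, n, N)))"
      using src_ext_pclass[OF a] rng_ext_pclass[OF \<beta>] x(3) X_eq by simp
    show "cmp (ext G) (Inl l) (Inr (pclass G (x, A, N))) = cmp (ext G) (Inr X) (Inr (pclass G (x, n, N)))"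
      using cmp_ext_Inl_segment[OF \<alpha> A(1,2)] cmp_ext_segment_segment[OF a N(1)] A(3) X_eq by simp
    have c: "(x, m, N) \<in> Pset G" using x N order_trans by (auto simp: Pset_iff)
    have "N - m = sup (deg G l) (n - m)" using sup_add_diff_fun[OF x(2)] by (simp add: N_def A_def)
    then have "deg (ext G) (Inr (pclass G (x, m, N))) = sup (deg G l) (n - m)"
      using deg_ext_pclass[OF c] by simp
    then show "deg (ext G) (cmp (ext G) (Inl l) (Inr (pclass G (x, A, N)))) = sup (deg G l) (deg (ext G) (Inr X))"
      using cmp_ext_Inl_segment[OF \<alpha> A(1,2)] A(3) deg_ext_pclass[OF a] X_eq by simp
  qed
  then show ?thesis using l(1) by blast
qed

lemma exhaustive_ext_Inl:
  assumes "finite E" "exhaustive G v E"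
  shows "exhaustive (ext G) (Inl v) (Inl ` E)"
  unfolding exhaustive_def
proof (intro conjI ballI)
  have E: "E \<subseteq> vMor G v" "\<forall>u\<in>vMor G v. \<exists>l\<in>E. MCE G l u \<noteq> {}"
    using assms(2) unfolding exhaustive_def by blast+
  then show "Inl ` E \<subseteq> vMor (ext G) (Inl v)"
    by (auto simp: vMor_def Mor_ext)
  fix \<mu> assume "\<mu> \<in> vMor (ext G) (Inl v)"
  then have \<mu>: "\<mu> \<in> Mor (ext G)" "rng (ext G) \<mu> = Inl v" by (simp_all add: vMor_def)
  show "\<exists>l\<in>Inl ` E. MCE (ext G) l \<mu> \<noteq> {}"
  proof (cases \<mu>)
    case (Inl u)
    then have "u \<in> vMor G v" using \<mu> by (auto simp: vMor_def Mor_ext)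
    then obtain l where "l \<in> E" "MCE G l u \<noteq> {}" using E(2) by blast
    moreover have "l \<in> Mor G" "u \<in> Mor G" using E(1) \<open>l \<in> E\<close> \<open>u \<in> vMor G v\<close> by (auto simp: vMor_def)
    ultimately show ?thesis using MCE_ext_Inl Inl by blast
  next
    case (Inr X)
    then show ?thesis using MCE_ext_Inl_Inr_nonempty[of X v E] \<mu> assms by (auto simp: Mor_ext)
  qed
qed

lemma Inl_verts_ext: "v \<in> verts G \<Longrightarrow> Inl v \<in> verts (ext G)"
  unfolding verts_def by (force simp: Mor_ext)

end

section \<open>Pulling back Cuntz--Krieger families\<close>

lemma CK_family_pullback:
  fixes G :: "('m, 'k::finite) kgraph" and H :: "('n, 'k) kgraph" and f :: "'m \<Rightarrow> 'n"
  assumes "inj f" and Mor: "f ` Mor G \<subseteq> Mor H" and verts: "f ` verts G \<subseteq> verts H"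
    and cmp: "\<And>l u. l \<in> Mor G \<Longrightarrow> u \<in> Mor G \<Longrightarrow> src G l = rng G u \<Longrightarrow>
      src H (f l) = rng H (f u) \<and> cmp H (f l) (f u) = f (cmp G l u)"
    and MCE: "\<And>l u. l \<in> Mor G \<Longrightarrow> u \<in> Mor G \<Longrightarrow> MCE H (f l) (f u) = map_prod f f ` MCE G l u"
    and FE: "\<And>v E. v \<in> verts G \<Longrightarrow> E \<in> vFE G v \<Longrightarrow> f ` E \<in> vFE H (f v)"
    and CK: "CK_family H t"
  shows "CK_family G (t \<circ> f)"
  unfolding CK_family_def
proof (intro conjI ballI allI impI)
  fix l assume "l \<in> Mor G"
  then show "partial_isometry ((t \<circ> f) l)" using CK Mor by (auto simp: CK_family_def)
next
  fix v assume "v \<in> verts G"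
  then show "adj ((t \<circ> f) v) = (t \<circ> f) v" "(t \<circ> f) v * (t \<circ> f) v = (t \<circ> f) v"
    using CK verts by (auto simp: CK_family_def)
next
  fix v w assume "v \<in> verts G" "w \<in> verts G" "v \<noteq> w"
  then have "f v \<in> verts H" "f w \<in> verts H" "f v \<noteq> f w" using verts \<open>inj f\<close> by (auto simp: inj_eq)
  then show "(t \<circ> f) v * (t \<circ> f) w = 0" using CK by (simp add: CK_family_def)
next
  fix l u assume "l \<in> Mor G" "u \<in> Mor G" "src G l = rng G u"
  then have "f l \<in> Mor H" "f u \<in> Mor H" "src H (f l) = rng H (f u)"
    "cmp H (f l) (f u) = f (cmp G l u)"
    using Mor cmp[of l u] by auto
  then show "(t \<circ> f) (cmp G l u) = (t \<circ> f) l * (t \<circ> f) u"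
    using CK unfolding CK_family_def by (metis comp_apply)
next
  fix l u assume lu: "l \<in> Mor G" "u \<in> Mor G"
  have "f l \<in> Mor H" "f u \<in> Mor H" using Mor lu by auto
  then have "adj ((t \<circ> f) l) * (t \<circ> f) u = (\<Sum>(a, b)\<in>MCE H (f l) (f u). t a * adj (t b))"
    using CK unfolding CK_family_def by simp
  also have "\<dots> = (\<Sum>(a, b)\<in>MCE G l u. (t \<circ> f) a * adj ((t \<circ> f) b))"
    using MCE[OF lu] inj_on_subset[OF prod.inj_map[OF \<open>inj f\<close> \<open>inj f\<close>]]
    by (simp add: sum.reindex case_prod_beta)
  finally show "adj ((t \<circ> f) l) * (t \<circ> f) u = (\<Sum>(a, b)\<in>MCE G l u. (t \<circ> f) a * adj ((t \<circ> f) b))" .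
next
  fix v E xs assume vE: "v \<in> verts G" "E \<in> vFE G v" and xs: "distinct xs \<and> set xs = E"
  have "distinct (map f xs) \<and> set (map f xs) = f ` E"
    using xs inj_on_subset[OF \<open>inj f\<close> subset_UNIV] by (simp add: distinct_map)
  moreover have "f v \<in> verts H" "f ` E \<in> vFE H (f v)" using verts FE[OF vE] vE(1) by auto
  ultimately have "nprod (map (\<lambda>l. t (f v) - t l * adj (t l)) (map f xs)) = 0"
    using CK unfolding CK_family_def by blast
  then show "nprod (map (\<lambda>l. (t \<circ> f) v - (t \<circ> f) l * adj ((t \<circ> f) l)) xs) = 0"
    by (simp add: comp_def)
qed

theorem theorem3p28:
  fixes G :: "('m, 'k::finite) kgraph"
    and t :: "'m + ('m, 'k) ptriple set \<Rightarrow> 'a::cstar_algebra"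
  assumes "kgraph G"
    and "finitely_aligned G"
    and "CK_family (ext G) t"
  shows "CK_family G (t \<circ> Inl)"
proof -
  interpret k_graph G by (rule k_graph.intro) (fact assms(1))
  show ?thesis
  proof (rule CK_family_pullback[OF _ _ _ _ MCE_ext_Inl _ assms(3)])
    show "inj Inl" by simp
    show "Inl ` Mor G \<subseteq> Mor (ext G)" by (simp add: Mor_ext)
    show "Inl ` verts G \<subseteq> verts (ext G)" using Inl_verts_ext by blast
    show "src (ext G) (Inl l) = rng (ext G) (Inl u) \<and> cmp (ext G) (Inl l) (Inl u) = Inl (cmp G l u)"
      if "src G l = rng G u" for l u
      using that by simp
    show "Inl ` E \<in> vFE (ext G) (Inl v)" if "E \<in> vFE G v" for v E
      using that exhaustive_ext_Inl by (simp add: vFE_def)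
  qed
qed

end
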